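(* Let $\Lambda=K\mathcal{Q}/I$ be a finite-dimensional algebra over a field $K$ as in the context, let $A\geqslant1$, let $\tilde{\Lambda}=\tilde{\Lambda}_A$ be its stretched algebra, $\varepsilon=\sum_{v\in\mathcal{Q}_0}v\in\tilde{\Lambda}$ and $B=\varepsilon\tilde{\Lambda}\varepsilon$. Then: (1) $\tilde{\Lambda}\varepsilon$ is projective as a right $B$-module; (2) $\varepsilon\tilde{\Lambda}$ is projective as a left $B$-module.
   Context: Conventions: $\mathcal{Q}$ is a finite quiver with vertex set $\mathcal{Q}_0$; $\mathfrak{o}(\alpha)$, $\mathfrak{t}(\alpha)$ denote start and end of an arrow; paths are written left to right. An element $x\in K\mathcal{Q}$ is uniform if $x=vx=xv'$ for vertices $v,v'$. $\Lambda=K\mathcal{Q}/I$ is finite-dimensional with $I$ an admissible ideal generated by a minimal set $\{g^2_1,\dots,g^2_m\}$ of uniform elements. Stretched algebra: for $A\geqslant1$, the quiver $\tilde{\mathcal{Q}}_A$ has all vertices of $\mathcal{Q}$ plus, for each arrow $\alpha$ of $\mathcal{Q}$, new vertices $w_1,\dots,w_{A-1}$; each arrow $\alpha$ is replaced by arrows $\alpha_1,\dots,\alpha_A$ with $\mathfrak{o}(\alpha_1)=\mathfrak{o}(\alpha)$, $\mathfrak{t}(\alpha_j)=\mathfrak{o}(\alpha_{j+1})=w_j$ ($1\le j\le A-1$), $\mathfrak{t}(\alpha_A)=\mathfrak{t}(\alpha)$, and the only arrows incident with $w_j$ are $\alpha_j,\alpha_{j+1}$. $\theta^*:K\mathcal{Q}\to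 K\tilde{\mathcal{Q}}_A$ is the algebra homomorphism fixing vertices and sending $\alpha\mapsto\alpha_1\cdots\alpha_A$; $\tilde{I}_A$ is the ideal generated by $\theta^*(g^2_1),\dots,\theta^*(g^2_m)$; $\tilde{\Lambda}_A=K\tilde{\mathcal{Q}}_A/\tilde{I}_A$. *)

theory Defs
  imports "HOL-Algebra.QuotRing" "HOL-Algebra.Module"
begin

record ('v, 'a) quiver =
  verts :: "'v set"
  arrs  :: "'a set"
  src   :: "'a \<Rightarrow> 'v"
  tgt   :: "'a \<Rightarrow> 'v"

text \<open>A path is a start vertex together with a list of arrows (written left to right);
  the trivial path at v is (v, []).\<close>
type_synonym ('v, 'a) qpath = "'v \<times> 'a list"

fun composable :: "('v, 'a) quiver \<Rightarrow> 'v \<Rightarrow> 'a list \<Rightarrow> bool" where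
  "composable Q v [] = True"
| "composable Q v (a # as) = (src Q a = v \<and> composable Q (tgt Q a) as)"

definition qpaths :: "('v, 'a) quiver \<Rightarrow> ('v, 'a) qpath set" where
  "qpaths Q = {(v, xs). v \<in> verts Q \<and> set xs \<subseteq> arrs Q \<and> composable Q v xs}"

definition ptgt :: "('v, 'a) quiver \<Rightarrow> ('v, 'a) qpath \<Rightarrow> 'v" where
  "ptgt Q p = (if snd p = [] then fst p else tgt Q (last (snd p)))"

text \<open>The path algebra KQ: finitely supported K-valued functions on paths;
  the product of two paths is their concatenation if composable and 0 otherwise.\<close>
definition path_algebra :: "('v, 'a) quiver \<Rightarrow> (('v, 'a) qpath \<Rightarrow> 'k::field) ring" where
  "path_algebra Q =
    \<lparr>carrier = {f. finite {p. f p \<noteq> 0} \<and> {p. f p \<noteq> 0} \<subseteq> qpaths Q},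
     mult = (\<lambda>f g p. \<Sum>k\<in>{0..length (snd p)}.
                f (fst p, take k (snd p)) * g (ptgt Q (fst p, take k (snd p)), drop k (snd p))),
     one = (\<lambda>p. if snd p = [] \<and> fst p \<in> verts Q then 1 else 0),
     zero = (\<lambda>p. 0),
     add = (\<lambda>f g p. f p + g p)\<rparr>"

definition pel :: "('v, 'a) qpath \<Rightarrow> (('v, 'a) qpath \<Rightarrow> 'k::field)" where
  "pel q = (\<lambda>p. if p = q then 1 else 0)"

definition vtx :: "'v \<Rightarrow> (('v, 'a) qpath \<Rightarrow> 'k::field)" where
  "vtx v = pel (v, [])"

definition uniform :: "('v, 'a) quiver \<Rightarrow> (('v, 'a) qpath \<Rightarrow> 'k::field) \<Rightarrow> bool" where
  "uniform Q x \<longleftrightarrow> (\<exists>v\<in>verts Q. \<exists>v'\<in>verts Q.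
      x = vtx v \<otimes>\<^bsub>path_algebra Q\<^esub> x \<and> x = x \<otimes>\<^bsub>path_algebra Q\<^esub> vtx v')"

definition arrow_ideal_pow :: "('v, 'a) quiver \<Rightarrow> nat \<Rightarrow> (('v, 'a) qpath \<Rightarrow> 'k::field) set" where
  "arrow_ideal_pow Q m =
     genideal (path_algebra Q) {pel p | p. p \<in> qpaths Q \<and> length (snd p) = m}"

definition admissible :: "('v, 'a) quiver \<Rightarrow> (('v, 'a) qpath \<Rightarrow> 'k::field) set \<Rightarrow> bool" where
  "admissible Q I \<longleftrightarrow> ideal I (path_algebra Q) \<and>
     (\<exists>m\<ge>2. arrow_ideal_pow Q m \<subseteq> I) \<and> I \<subseteq> arrow_ideal_pow Q 2"

definition minimal_generating_set ::
  "('v, 'a) quiver \<Rightarrow> (('v, 'a) qpath \<Rightarrow> 'k::field) set \<Rightarrow> (('v, 'a) qpath \<Rightarrow> 'k) set \<Rightarrow> bool" where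
  "minimal_generating_set Q G I \<longleftrightarrow> finite G \<and> G \<subseteq> carrier (path_algebra Q) \<and>
     genideal (path_algebra Q) G = I \<and>
     (\<forall>H. H \<subset> G \<longrightarrow> genideal (path_algebra Q) H \<noteq> I)"

text \<open>New vertices w_j of arrow alpha are Inr (alpha, j), 1 <= j <= A-1;
  the arrows alpha_1 .. alpha_A are (alpha, 1) .. (alpha, A).\<close>
definition stretch_quiver :: "nat \<Rightarrow> ('v, 'a) quiver \<Rightarrow> ('v + 'a \<times> nat, 'a \<times> nat) quiver" where
  "stretch_quiver A Q =
    \<lparr>verts = Inl ` verts Q \<union> {Inr (\<alpha>, j) | \<alpha> j. \<alpha> \<in> arrs Q \<and> 1 \<le> j \<and> j \<le> A - 1},
     arrs = {(\<alpha>, j) | \<alpha> j. \<alpha> \<in> arrs Q \<and> 1 \<le> j \<and> j \<le> A},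
     src = (\<lambda>(\<alpha>, j). if j = 1 then Inl (src Q \<alpha>) else Inr (\<alpha>, j - 1)),
     tgt = (\<lambda>(\<alpha>, j). if j = A then Inl (tgt Q \<alpha>) else Inr (\<alpha>, j))\<rparr>"

definition stretch_path :: "nat \<Rightarrow> ('v, 'a) qpath \<Rightarrow> ('v + 'a \<times> nat, 'a \<times> nat) qpath" where
  "stretch_path A p = (Inl (fst p), concat (map (\<lambda>\<alpha>. map (\<lambda>j. (\<alpha>, j)) [1..<A+1]) (snd p)))"

text \<open>theta*: the linear (algebra) map fixing vertices and sending each arrow alpha to
  alpha_1 ... alpha_A, i.e. sending each path to its stretched path.\<close>
definition theta :: "nat \<Rightarrow> (('v, 'a) qpath \<Rightarrow> 'k::field) \<Rightarrow> (('v + 'a \<times> nat, 'a \<times> nat) qpath \<Rightarrow> 'k)" where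
  "theta A f = (\<lambda>q. \<Sum>p\<in>{p. f p \<noteq> 0 \<and> stretch_path A p = q}. f p)"

definition stretched_ideal ::
  "nat \<Rightarrow> ('v, 'a) quiver \<Rightarrow> (('v, 'a) qpath \<Rightarrow> 'k::field) set \<Rightarrow> (('v + 'a \<times> nat, 'a \<times> nat) qpath \<Rightarrow> 'k) set" where
  "stretched_ideal A Q G = genideal (path_algebra (stretch_quiver A Q)) (theta A ` G)"

definition stretched_algebra ::
  "nat \<Rightarrow> ('v, 'a) quiver \<Rightarrow> (('v, 'a) qpath \<Rightarrow> 'k::field) set \<Rightarrow> (('v + 'a \<times> nat, 'a \<times> nat) qpath \<Rightarrow> 'k) set ring" where
  "stretched_algebra A Q G = path_algebra (stretch_quiver A Q) Quot stretched_ideal A Q G"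

definition stretched_eps ::
  "nat \<Rightarrow> ('v, 'a) quiver \<Rightarrow> (('v, 'a) qpath \<Rightarrow> 'k::field) set \<Rightarrow> (('v + 'a \<times> nat, 'a \<times> nat) qpath \<Rightarrow> 'k) set" where
  "stretched_eps A Q G =
     stretched_ideal A Q G +>\<^bsub>path_algebra (stretch_quiver A Q)\<^esub>
       (\<Oplus>\<^bsub>path_algebra (stretch_quiver A Q)\<^esub> v\<in>verts Q. vtx (Inl v))"

definition corner_ring :: "('r, 'c) ring_scheme \<Rightarrow> 'r \<Rightarrow> 'r ring" where
  "corner_ring R e =
    \<lparr>carrier = {e \<otimes>\<^bsub>R\<^esub> x \<otimes>\<^bsub>R\<^esub> e | x. x \<in> carrier R},
     mult = mult R, one = e, zero = \<zero>\<^bsub>R\<^esub>, add = add R\<rparr>"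

text \<open>Modules over a (not necessarily commutative) ring, using the module record of
  HOL-Algebra (only carrier, add, zero and smult are relevant). For a right module,
  smult r m stands for m r.\<close>
definition left_module :: "('r, 'c) ring_scheme \<Rightarrow> ('r, 'm) module \<Rightarrow> bool" where
  "left_module R M \<longleftrightarrow> ring R \<and> abelian_group M \<and>
    (\<forall>a\<in>carrier R. \<forall>x\<in>carrier M. a \<odot>\<^bsub>M\<^esub> x \<in> carrier M) \<and>
    (\<forall>a\<in>carrier R. \<forall>b\<in>carrier R. \<forall>x\<in>carrier M. (a \<oplus>\<^bsub>R\<^esub> b) \<odot>\<^bsub>M\<^esub> x = a \<odot>\<^bsub>M\<^esub> x \<oplus>\<^bsub>M\<^esub> b \<odot>\<^bsub>M\<^esub> x) \<and>
    (\<forall>a\<in>carrier R. \<forall>x\<in>carrier M. \<forall>y\<in>carrier M. a \<odot>\<^bsub>M\<^esub> (x \<oplus>\<^bsub>M\<^esub> y) = a \<odot>\<^bsub>M\<^esub> x \<oplus>\<^bsub>M\<^esub> a \<odot>\<^bsub>M\<^esub> y) \<and>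
    (\<forall>a\<in>carrier R. \<forall>b\<in>carrier R. \<forall>x\<in>carrier M. (a \<otimes>\<^bsub>R\<^esub> b) \<odot>\<^bsub>M\<^esub> x = a \<odot>\<^bsub>M\<^esub> (b \<odot>\<^bsub>M\<^esub> x)) \<and>
    (\<forall>x\<in>carrier M. \<one>\<^bsub>R\<^esub> \<odot>\<^bsub>M\<^esub> x = x)"

definition right_module :: "('r, 'c) ring_scheme \<Rightarrow> ('r, 'm) module \<Rightarrow> bool" where
  "right_module R M \<longleftrightarrow> ring R \<and> abelian_group M \<and>
    (\<forall>a\<in>carrier R. \<forall>x\<in>carrier M. a \<odot>\<^bsub>M\<^esub> x \<in> carrier M) \<and>
    (\<forall>a\<in>carrier R. \<forall>b\<in>carrier R. \<forall>x\<in>carrier M. (a \<oplus>\<^bsub>R\<^esub> b) \<odot>\<^bsub>M\<^esub> x = a \<odot>\<^bsub>M\<^esub> x \<oplus>\<^bsub>M\<^esub> b \<odot>\<^bsub>M\<^esub> x) \<and>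
    (\<forall>a\<in>carrier R. \<forall>x\<in>carrier M. \<forall>y\<in>carrier M. a \<odot>\<^bsub>M\<^esub> (x \<oplus>\<^bsub>M\<^esub> y) = a \<odot>\<^bsub>M\<^esub> x \<oplus>\<^bsub>M\<^esub> a \<odot>\<^bsub>M\<^esub> y) \<and>
    (\<forall>a\<in>carrier R. \<forall>b\<in>carrier R. \<forall>x\<in>carrier M. (a \<otimes>\<^bsub>R\<^esub> b) \<odot>\<^bsub>M\<^esub> x = b \<odot>\<^bsub>M\<^esub> (a \<odot>\<^bsub>M\<^esub> x)) \<and>
    (\<forall>x\<in>carrier M. \<one>\<^bsub>R\<^esub> \<odot>\<^bsub>M\<^esub> x = x)"

definition mod_hom :: "('r, 'c) ring_scheme \<Rightarrow> ('r, 'm) module \<Rightarrow> ('r, 'n) module \<Rightarrow> ('m \<Rightarrow> 'n) set" where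
  "mod_hom R M N = {h. h \<in> carrier M \<rightarrow> carrier N \<and>
     (\<forall>x\<in>carrier M. \<forall>y\<in>carrier M. h (x \<oplus>\<^bsub>M\<^esub> y) = h x \<oplus>\<^bsub>N\<^esub> h y) \<and>
     (\<forall>a\<in>carrier R. \<forall>x\<in>carrier M. h (a \<odot>\<^bsub>M\<^esub> x) = a \<odot>\<^bsub>N\<^esub> h x)}"

text \<open>The test modules M, N range over modules whose
  carriers live in the arbitrary types 'm and 'n; stating the theorem for all such types
  (free type variables) gives projectivity in the usual sense.\<close>
definition left_projective ::
  "('r, 'c) ring_scheme \<Rightarrow> ('r, 'p) module \<Rightarrow> 'm itself \<Rightarrow> 'n itself \<Rightarrow> bool" where
  "left_projective R P (_ :: 'm itself) (_ :: 'n itself) \<longleftrightarrow> left_module R P \<and>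
    (\<forall>(M :: ('r, 'm) module) (N :: ('r, 'n) module) g f.
       left_module R M \<and> left_module R N \<and> g \<in> mod_hom R M N \<and> g ` carrier M = carrier N \<and>
       f \<in> mod_hom R P N \<longrightarrow> (\<exists>h\<in>mod_hom R P M. \<forall>x\<in>carrier P. g (h x) = f x))"

definition right_projective ::
  "('r, 'c) ring_scheme \<Rightarrow> ('r, 'p) module \<Rightarrow> 'm itself \<Rightarrow> 'n itself \<Rightarrow> bool" where
  "right_projective R P (_ :: 'm itself) (_ :: 'n itself) \<longleftrightarrow> right_module R P \<and>
    (\<forall>(M :: ('r, 'm) module) (N :: ('r, 'n) module) g f.
       right_module R M \<and> right_module R N \<and> g \<in> mod_hom R M N \<and> g ` carrier M = carrier N \<and>
       f \<in> mod_hom R P N \<longrightarrow> (\<exists>h\<in>mod_hom R P M. \<forall>x\<in>carrier P. g (h x) = f x))"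

definition right_corner_module :: "('r, 'c) ring_scheme \<Rightarrow> 'r \<Rightarrow> ('r, 'r) module" where
  "right_corner_module R e =
    \<lparr>carrier = {x \<otimes>\<^bsub>R\<^esub> e | x. x \<in> carrier R}, mult = mult R, one = \<one>\<^bsub>R\<^esub>,
     zero = \<zero>\<^bsub>R\<^esub>, add = add R, smult = (\<lambda>b x. x \<otimes>\<^bsub>R\<^esub> b)\<rparr>"

definition left_corner_module :: "('r, 'c) ring_scheme \<Rightarrow> 'r \<Rightarrow> ('r, 'r) module" where
  "left_corner_module R e =
    \<lparr>carrier = {e \<otimes>\<^bsub>R\<^esub> x | x. x \<in> carrier R}, mult = mult R, one = \<one>\<^bsub>R\<^esub>,
     zero = \<zero>\<^bsub>R\<^esub>, add = add R, smult = (\<lambda>b x. b \<otimes>\<^bsub>R\<^esub> x)\<rparr>"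

end

theory Submission
  imports Defs
begin

text \<open>
  Let \<open>e\<close> be the sum of the old vertices in the path algebra \<open>KQ\<^sub>A\<close> of the stretched quiver, so
  that \<open>\<epsilon>\<close> is the class of \<open>e\<close>. For a vertex \<open>u\<close> let \<open>p\<^sub>u\<close> be \<open>\<alpha>\<^sub>j\<^sub>+\<^sub>1 \<dots> \<alpha>\<^sub>A\<close> if \<open>u = w\<^sub>j\<close> lies on
  the arrow \<open>\<alpha>\<close>, and the trivial path at \<open>u\<close> if \<open>u\<close> is old. The inner vertices of \<open>p\<^sub>u\<close> have a single
  outgoing arrow, so every path from \<open>u\<close> to an old vertex begins with \<open>p\<^sub>u\<close>. Stripping this prefix
  is a linear map \<open>c\<^sub>u\<close> with \<open>u y = p\<^sub>u c\<^sub>u(y)\<close> for \<open>y \<in> KQ\<^sub>A e\<close>; it takes values in \<open>e KQ\<^sub>A e\<close> and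
  commutes with right multiplication. As the generators \<open>\<theta>(g)\<close> start and end at old vertices and
  stripping a single arrow obeys a Leibniz rule, \<open>c\<^sub>u\<close> preserves the ideal \<open>I\<^sub>A\<close> generated by them,
  hence descends to a \<open>B\<close>-linear map \<open>\<Lambda>\<epsilon> \<rightarrow> B\<close>. Then \<open>y = \<Sum>\<^sub>u p\<^sub>u c\<^sub>u(y)\<close> exhibits a finite dual
  basis of the right \<open>B\<close>-module \<open>\<Lambda>\<epsilon>\<close>, which is therefore projective. The left module \<open>\<epsilon>\<Lambda>\<close> is
  handled symmetrically, stripping the path \<open>\<alpha>\<^sub>1 \<dots> \<alpha>\<^sub>j\<close> into \<open>w\<^sub>j\<close> from the right.
\<close>

section \<open>Corner rings and the dual basis lemma\<close>

lemma corner_ring_simps: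
  "carrier (corner_ring R e) = {e \<otimes>\<^bsub>R\<^esub> x \<otimes>\<^bsub>R\<^esub> e | x. x \<in> carrier R}"
  "mult (corner_ring R e) = mult R" "\<one>\<^bsub>corner_ring R e\<^esub> = e"
  "\<zero>\<^bsub>corner_ring R e\<^esub> = \<zero>\<^bsub>R\<^esub>" "add (corner_ring R e) = add R"
  by (simp_all add: corner_ring_def)

lemma right_corner_module_simps:
  "carrier (right_corner_module R e) = {x \<otimes>\<^bsub>R\<^esub> e | x. x \<in> carrier R}"
  "\<zero>\<^bsub>right_corner_module R e\<^esub> = \<zero>\<^bsub>R\<^esub>" "add (right_corner_module R e) = add R"
  "a \<odot>\<^bsub>right_corner_module R e\<^esub> x = x \<otimes>\<^bsub>R\<^esub> a"
  by (simp_all add: right_corner_module_def)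

lemma left_corner_module_simps:
  "carrier (left_corner_module R e) = {e \<otimes>\<^bsub>R\<^esub> x | x. x \<in> carrier R}"
  "\<zero>\<^bsub>left_corner_module R e\<^esub> = \<zero>\<^bsub>R\<^esub>" "add (left_corner_module R e) = add R"
  "a \<odot>\<^bsub>left_corner_module R e\<^esub> x = a \<otimes>\<^bsub>R\<^esub> x"
  by (simp_all add: left_corner_module_def)

context ring
begin

context
  fixes e assumes e: "e \<in> carrier R" "e \<otimes> e = e"
begin

lemma corner_ring_carrier_iff:
  "b \<in> carrier (corner_ring R e) \<longleftrightarrow> b \<in> carrier R \<and> e \<otimes> b = b \<and> b \<otimes> e = b"
proof
  assume "b \<in> carrier (corner_ring R e)"
  then obtain x where "x \<in> carrier R" "b = e \<otimes> x \<otimes> e" by (auto simp: corner_ring_simps)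
  then show "b \<in> carrier R \<and> e \<otimes> b = b \<and> b \<otimes> e = b"
    using e by (simp add: m_assoc[symmetric]) (simp add: m_assoc)
qed (auto simp: corner_ring_simps intro!: exI[of _ b])

lemma right_corner_module_carrier_iff:
  "y \<in> carrier (right_corner_module R e) \<longleftrightarrow> y \<in> carrier R \<and> y \<otimes> e = y"
  using e by (auto simp: right_corner_module_simps m_assoc intro!: exI[of _ y])

lemma left_corner_module_carrier_iff:
  "y \<in> carrier (left_corner_module R e) \<longleftrightarrow> y \<in> carrier R \<and> e \<otimes> y = y"
  using e by (auto simp: left_corner_module_simps m_assoc[symmetric] intro!: exI[of _ y])

lemma ring_corner_ring: "ring (corner_ring R e)"
proof -
  note C = corner_ring_carrier_iff and S = corner_ring_simps(2-5)
  have carr: "x \<in> carrier R" if "x \<in> carrier (corner_ring R e)" for x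
    using that by (simp add: C)
  show ?thesis
  proof (rule ringI)
    show "abelian_group (corner_ring R e)"
    proof (rule abelian_groupI)
      fix x assume "x \<in> carrier (corner_ring R e)"
      then show "\<exists>y\<in>carrier (corner_ring R e). y \<oplus>\<^bsub>corner_ring R e\<^esub> x = \<zero>\<^bsub>corner_ring R e\<^esub>"
        using e by (intro bexI[of _ "\<ominus> x"]) (auto simp: S C l_neg l_minus r_minus)
    qed (use e in \<open>auto simp: S C a_ac r_distr l_distr\<close>)
    show "monoid (corner_ring R e)"
      using e by (intro monoidI) (auto simp: S C m_assoc, metis m_assoc)
  qed (auto simp: S r_distr l_distr carr)
qed

lemma right_module_right_corner_module:
  "right_module (corner_ring R e) (right_corner_module R e)"
proof -
  note C = corner_ring_carrier_iff and P = right_corner_module_carrier_iff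
  note S = corner_ring_simps(2-5) right_corner_module_simps(2-4)
  have "abelian_group (right_corner_module R e)"
  proof (rule abelian_groupI)
    fix x assume "x \<in> carrier (right_corner_module R e)"
    then show "\<exists>y\<in>carrier (right_corner_module R e).
        y \<oplus>\<^bsub>right_corner_module R e\<^esub> x = \<zero>\<^bsub>right_corner_module R e\<^esub>"
      using e by (intro bexI[of _ "\<ominus> x"]) (auto simp: S P l_neg l_minus)
  qed (use e in \<open>auto simp: S P l_distr a_ac\<close>)
  then show ?thesis
    using e unfolding right_module_def
    by (auto simp: ring_corner_ring S P C r_distr l_distr m_assoc)
qed

lemma left_module_left_corner_module:
  "left_module (corner_ring R e) (left_corner_module R e)"
proof -
  note C = corner_ring_carrier_iff and P = left_corner_module_carrier_iff
  note S = corner_ring_simps(2-5) left_corner_module_simps(2-4)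
  have "abelian_group (left_corner_module R e)"
  proof (rule abelian_groupI)
    fix x assume "x \<in> carrier (left_corner_module R e)"
    then show "\<exists>y\<in>carrier (left_corner_module R e).
        y \<oplus>\<^bsub>left_corner_module R e\<^esub> x = \<zero>\<^bsub>left_corner_module R e\<^esub>"
      using e by (intro bexI[of _ "\<ominus> x"]) (auto simp: S P l_neg r_minus)
  qed (use e in \<open>auto simp: S P r_distr a_ac\<close>)
  then show ?thesis
    using e unfolding left_module_def
    by (auto simp: ring_corner_ring S P C r_distr l_distr m_assoc[symmetric])
qed

end

end

definition opposite_ring :: "('r, 'c) ring_scheme \<Rightarrow> 'r ring" where
  "opposite_ring R = \<lparr>carrier = carrier R, mult = (\<lambda>x y. y \<otimes>\<^bsub>R\<^esub> x), one = \<one>\<^bsub>R\<^esub>,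
     zero = \<zero>\<^bsub>R\<^esub>, add = add R\<rparr>"

lemma opposite_ring_simps [simp]:
  "carrier (opposite_ring R) = carrier R" "x \<otimes>\<^bsub>opposite_ring R\<^esub> y = y \<otimes>\<^bsub>R\<^esub> x"
  "\<one>\<^bsub>opposite_ring R\<^esub> = \<one>\<^bsub>R\<^esub>" "\<zero>\<^bsub>opposite_ring R\<^esub> = \<zero>\<^bsub>R\<^esub>" "add (opposite_ring R) = add R"
  by (simp_all add: opposite_ring_def)

lemma (in ring) ring_opposite_ring: "ring (opposite_ring R)"
proof (rule ringI)
  show "abelian_group (opposite_ring R)"
    by (rule abelian_groupI) (auto simp: a_ac intro: l_neg)
  show "monoid (opposite_ring R)"
    by (rule monoidI) (auto simp: m_assoc)
qed (auto simp: l_distr r_distr)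

lemma mod_hom_opposite_ring [simp]: "mod_hom (opposite_ring R) = mod_hom R"
  by (simp add: mod_hom_def fun_eq_iff)

lemma (in ring) right_module_iff_left_module_opposite:
  "right_module R M \<longleftrightarrow> left_module (opposite_ring R) M"
  by (auto simp: right_module_def left_module_def ring_axioms ring_opposite_ring)

lemma (in ring) right_projective_iff_left_projective_opposite:
  "right_projective R P TYPE('m) TYPE('n) \<longleftrightarrow> left_projective (opposite_ring R) P TYPE('m) TYPE('n)"
  by (simp add: right_projective_def left_projective_def right_module_iff_left_module_opposite)

lemma additive_hom_finsum:
  assumes "abelian_group M" "abelian_group N" "h \<in> carrier M \<rightarrow> carrier N"
    and "\<And>x y. x \<in> carrier M \<Longrightarrow> y \<in> carrier M \<Longrightarrow> h (x \<oplus>\<^bsub>M\<^esub> y) = h x \<oplus>\<^bsub>N\<^esub> h y"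
    and "finite I" "F \<in> I \<rightarrow> carrier M"
  shows "h (finsum M F I) = finsum N (\<lambda>i. h (F i)) I"
proof -
  interpret abelian_group_hom M N h
    using assms(1-4) by (intro abelian_group_homI group_hom.intro group_hom_axioms.intro)
      (auto simp: abelian_group.a_group hom_def)
  show ?thesis
    using assms(5,6) by (induction I rule: finite_induct) (auto simp: G.finsum_closed Pi_def)
qed

lemma finsum_substructure:
  assumes "abelian_group M" "abelian_group N" "carrier N \<subseteq> carrier M"
    and "\<And>x y. x \<in> carrier N \<Longrightarrow> y \<in> carrier N \<Longrightarrow> x \<oplus>\<^bsub>N\<^esub> y = x \<oplus>\<^bsub>M\<^esub> y" "\<zero>\<^bsub>N\<^esub> = \<zero>\<^bsub>M\<^esub>"
    and "finite I" "F \<in> I \<rightarrow> carrier N"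
  shows "finsum N F I = finsum M F I"
  using assms(6,7)
proof (induction I rule: finite_induct)
  case empty
  interpret M: abelian_group M by fact
  interpret N: abelian_group N by fact
  show ?case using assms(5) by simp
next
  case (insert i I)
  interpret M: abelian_group M by fact
  interpret N: abelian_group N by fact
  have "F \<in> I \<rightarrow> carrier N" "F i \<in> carrier N"
    using insert.prems by auto
  moreover have "F \<in> I \<rightarrow> carrier M" "F i \<in> carrier M"
    using calculation assms(3) by auto
  ultimately show ?case
    using insert.IH assms(4) N.finsum_closed[of F I] by (simp add: M.finsum_insert N.finsum_insert insert.hyps)
qed

lemma left_module_smult_finsum:
  assumes M: "left_module B M" and "a \<in> carrier B" "finite I" "F \<in> I \<rightarrow> carrier M"
  shows "a \<odot>\<^bsub>M\<^esub> (\<Oplus>\<^bsub>M\<^esub>i\<in>I. F i) = (\<Oplus>\<^bsub>M\<^esub>i\<in>I. a \<odot>\<^bsub>M\<^esub> F i)"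
proof -
  have "abelian_group M"
    using M by (simp add: left_module_def)
  then show ?thesis
    using assms by (intro additive_hom_finsum) (auto simp: left_module_def)
qed

lemma mod_hom_from_dual_basis:
  assumes M: "left_module B M" and P: "left_module B P" and I: "finite I"
    and m: "\<And>i. i \<in> I \<Longrightarrow> m i \<in> carrier M"
    and \<phi>_closed: "\<And>i y. i \<in> I \<Longrightarrow> y \<in> carrier P \<Longrightarrow> \<phi> i y \<in> carrier B"
    and \<phi>_add: "\<And>i y z. i \<in> I \<Longrightarrow> y \<in> carrier P \<Longrightarrow> z \<in> carrier P \<Longrightarrow>
      \<phi> i (y \<oplus>\<^bsub>P\<^esub> z) = \<phi> i y \<oplus>\<^bsub>B\<^esub> \<phi> i z"
    and \<phi>_smult: "\<And>i a y. i \<in> I \<Longrightarrow> a \<in> carrier B \<Longrightarrow> y \<in> carrier P \<Longrightarrow>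
      \<phi> i (a \<odot>\<^bsub>P\<^esub> y) = a \<otimes>\<^bsub>B\<^esub> \<phi> i y"
  shows "(\<lambda>y. \<Oplus>\<^bsub>M\<^esub>i\<in>I. \<phi> i y \<odot>\<^bsub>M\<^esub> m i) \<in> mod_hom B P M"
proof -
  interpret M: abelian_group M
    using M by (simp add: left_module_def)
  have M_closed: "\<And>a x. a \<in> carrier B \<Longrightarrow> x \<in> carrier M \<Longrightarrow> a \<odot>\<^bsub>M\<^esub> x \<in> carrier M"
    and M_distr: "\<And>a b x. a \<in> carrier B \<Longrightarrow> b \<in> carrier B \<Longrightarrow> x \<in> carrier M \<Longrightarrow>
       (a \<oplus>\<^bsub>B\<^esub> b) \<odot>\<^bsub>M\<^esub> x = a \<odot>\<^bsub>M\<^esub> x \<oplus>\<^bsub>M\<^esub> b \<odot>\<^bsub>M\<^esub> x"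
    and M_assoc: "\<And>a b x. a \<in> carrier B \<Longrightarrow> b \<in> carrier B \<Longrightarrow> x \<in> carrier M \<Longrightarrow>
       (a \<otimes>\<^bsub>B\<^esub> b) \<odot>\<^bsub>M\<^esub> x = a \<odot>\<^bsub>M\<^esub> (b \<odot>\<^bsub>M\<^esub> x)"
    using M by (simp_all add: left_module_def)
  have terms: "(\<lambda>i. \<phi> i y \<odot>\<^bsub>M\<^esub> m i) \<in> I \<rightarrow> carrier M" if "y \<in> carrier P" for y
    using that by (auto intro!: M_closed \<phi>_closed m)
  have "(\<Oplus>\<^bsub>M\<^esub>i\<in>I. \<phi> i (y \<oplus>\<^bsub>P\<^esub> z) \<odot>\<^bsub>M\<^esub> m i) =
      (\<Oplus>\<^bsub>M\<^esub>i\<in>I. \<phi> i y \<odot>\<^bsub>M\<^esub> m i \<oplus>\<^bsub>M\<^esub> \<phi> i z \<odot>\<^bsub>M\<^esub> m i)"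
    if "y \<in> carrier P" "z \<in> carrier P" for y z
    using terms[OF that(1)] terms[OF that(2)] that
    by (intro M.finsum_cong') (auto simp: \<phi>_add \<phi>_closed M_distr m)
  moreover have "(\<Oplus>\<^bsub>M\<^esub>i\<in>I. \<phi> i (a \<odot>\<^bsub>P\<^esub> y) \<odot>\<^bsub>M\<^esub> m i) = (\<Oplus>\<^bsub>M\<^esub>i\<in>I. a \<odot>\<^bsub>M\<^esub> (\<phi> i y \<odot>\<^bsub>M\<^esub> m i))"
    if "a \<in> carrier B" "y \<in> carrier P" for a y
    using that by (auto intro!: M.finsum_cong' simp: \<phi>_smult \<phi>_closed M_closed M_assoc m)
  ultimately show ?thesis
    unfolding mod_hom_def using terms
    by (auto simp: M.finsum_addf left_module_smult_finsum[OF M _ I] intro: M.finsum_closed)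
qed

lemma dual_basis_lift_commutes:
  assumes M: "left_module B M" and N: "left_module B N" and P: "left_module B P" and I: "finite I"
    and g: "g \<in> mod_hom B M N" and f: "f \<in> mod_hom B P N"
    and x: "\<And>i. i \<in> I \<Longrightarrow> x i \<in> carrier P"
    and m: "\<And>i. i \<in> I \<Longrightarrow> m i \<in> carrier M" "\<And>i. i \<in> I \<Longrightarrow> g (m i) = f (x i)"
    and \<phi>_closed: "\<And>i. i \<in> I \<Longrightarrow> \<phi> i y \<in> carrier B"
    and decomp: "y = (\<Oplus>\<^bsub>P\<^esub>i\<in>I. \<phi> i y \<odot>\<^bsub>P\<^esub> x i)"
  shows "g (\<Oplus>\<^bsub>M\<^esub>i\<in>I. \<phi> i y \<odot>\<^bsub>M\<^esub> m i) = f y"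
proof -
  have groups: "abelian_group M" "abelian_group N" "abelian_group P"
    using M N P by (simp_all add: left_module_def)
  interpret N: abelian_group N by (fact groups(2))
  have M_term: "\<phi> i y \<odot>\<^bsub>M\<^esub> m i \<in> carrier M" and P_term: "\<phi> i y \<odot>\<^bsub>P\<^esub> x i \<in> carrier P" if "i \<in> I" for i
    using M P m(1)[OF that] x[OF that] \<phi>_closed[OF that] by (simp_all add: left_module_def)
  have "g (\<Oplus>\<^bsub>M\<^esub>i\<in>I. \<phi> i y \<odot>\<^bsub>M\<^esub> m i) = (\<Oplus>\<^bsub>N\<^esub>i\<in>I. g (\<phi> i y \<odot>\<^bsub>M\<^esub> m i))"
    using g M_term by (intro additive_hom_finsum[OF groups(1,2) _ _ I]) (auto simp: mod_hom_def)
  also have "\<dots> = (\<Oplus>\<^bsub>N\<^esub>i\<in>I. f (\<phi> i y \<odot>\<^bsub>P\<^esub> x i))"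
  proof (rule N.finsum_cong'[OF refl])
    show "(\<lambda>i. f (\<phi> i y \<odot>\<^bsub>P\<^esub> x i)) \<in> I \<rightarrow> carrier N"
      using f P_term by (auto simp: mod_hom_def)
  next
    fix i assume i: "i \<in> I"
    have "g (\<phi> i y \<odot>\<^bsub>M\<^esub> m i) = \<phi> i y \<odot>\<^bsub>N\<^esub> g (m i)"
      using g \<phi>_closed[OF i] m(1)[OF i] by (simp add: mod_hom_def)
    also have "\<dots> = f (\<phi> i y \<odot>\<^bsub>P\<^esub> x i)"
      using f \<phi>_closed[OF i] x[OF i] m(2)[OF i] by (simp add: mod_hom_def)
    finally show "g (\<phi> i y \<odot>\<^bsub>M\<^esub> m i) = f (\<phi> i y \<odot>\<^bsub>P\<^esub> x i)" .
  qed
  also have "\<dots> = f (\<Oplus>\<^bsub>P\<^esub>i\<in>I. \<phi> i y \<odot>\<^bsub>P\<^esub> x i)"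
    using f P_term by (intro additive_hom_finsum[OF groups(3,2) _ _ I, symmetric]) (auto simp: mod_hom_def)
  finally show ?thesis
    by (simp only: decomp[symmetric])
qed

lemma left_projective_if_dual_basis:
  fixes B :: "('r, 'c) ring_scheme" and P :: "('r, 'p) module"
  assumes P: "left_module B P" and I: "finite I"
    and x: "\<And>i. i \<in> I \<Longrightarrow> x i \<in> carrier P"
    and \<phi>_closed: "\<And>i y. i \<in> I \<Longrightarrow> y \<in> carrier P \<Longrightarrow> \<phi> i y \<in> carrier B"
    and \<phi>_add: "\<And>i y z. i \<in> I \<Longrightarrow> y \<in> carrier P \<Longrightarrow> z \<in> carrier P \<Longrightarrow>
      \<phi> i (y \<oplus>\<^bsub>P\<^esub> z) = \<phi> i y \<oplus>\<^bsub>B\<^esub> \<phi> i z"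
    and \<phi>_smult: "\<And>i a y. i \<in> I \<Longrightarrow> a \<in> carrier B \<Longrightarrow> y \<in> carrier P \<Longrightarrow>
      \<phi> i (a \<odot>\<^bsub>P\<^esub> y) = a \<otimes>\<^bsub>B\<^esub> \<phi> i y"
    and decomp: "\<And>y. y \<in> carrier P \<Longrightarrow> y = (\<Oplus>\<^bsub>P\<^esub>i\<in>I. \<phi> i y \<odot>\<^bsub>P\<^esub> x i)"
  shows "left_projective B P TYPE('m) TYPE('n)"
  unfolding left_projective_def
proof (intro conjI P allI impI, elim conjE)
  fix M :: "('r, 'm) module" and N :: "('r, 'n) module" and g f
  assume M: "left_module B M" and N: "left_module B N" and g: "g \<in> mod_hom B M N"
    and onto: "g ` carrier M = carrier N" and f: "f \<in> mod_hom B P N"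
  have "f (x i) \<in> g ` carrier M" if "i \<in> I" for i
    using f x[OF that] onto by (auto simp: mod_hom_def)
  then have "\<forall>i\<in>I. \<exists>y. y \<in> carrier M \<and> g y = f (x i)"
    by (metis imageE)
  then obtain m where m: "\<forall>i\<in>I. m i \<in> carrier M \<and> g (m i) = f (x i)"
    by (auto dest!: bchoice)
  let ?h = "\<lambda>y. \<Oplus>\<^bsub>M\<^esub>i\<in>I. \<phi> i y \<odot>\<^bsub>M\<^esub> m i"
  have "?h \<in> mod_hom B P M"
    using m by (intro mod_hom_from_dual_basis[OF M P I _ \<phi>_closed \<phi>_add \<phi>_smult]) auto
  moreover have "g (?h y) = f y" if "y \<in> carrier P" for y
    using m that by (intro dual_basis_lift_commutes[OF M N P I g f x _ _ \<phi>_closed decomp]) auto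
  ultimately show "\<exists>h\<in>mod_hom B P M. \<forall>y\<in>carrier P. g (h y) = f y"
    by (intro bexI[of _ ?h]) simp_all
qed

lemma right_projective_if_dual_basis:
  assumes P: "right_module B P" and I: "finite I"
    and x: "\<And>i. i \<in> I \<Longrightarrow> x i \<in> carrier P"
    and \<phi>_closed: "\<And>i y. i \<in> I \<Longrightarrow> y \<in> carrier P \<Longrightarrow> \<phi> i y \<in> carrier B"
    and \<phi>_add: "\<And>i y z. i \<in> I \<Longrightarrow> y \<in> carrier P \<Longrightarrow> z \<in> carrier P \<Longrightarrow>
      \<phi> i (y \<oplus>\<^bsub>P\<^esub> z) = \<phi> i y \<oplus>\<^bsub>B\<^esub> \<phi> i z"
    and \<phi>_smult: "\<And>i a y. i \<in> I \<Longrightarrow> a \<in> carrier B \<Longrightarrow> y \<in> carrier P \<Longrightarrow>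
      \<phi> i (a \<odot>\<^bsub>P\<^esub> y) = \<phi> i y \<otimes>\<^bsub>B\<^esub> a"
    and decomp: "\<And>y. y \<in> carrier P \<Longrightarrow> y = (\<Oplus>\<^bsub>P\<^esub>i\<in>I. \<phi> i y \<odot>\<^bsub>P\<^esub> x i)"
  shows "right_projective B P TYPE('m) TYPE('n)"
proof -
  interpret ring B
    using P by (simp add: right_module_def)
  show ?thesis
    unfolding right_projective_iff_left_projective_opposite
    by (rule left_projective_if_dual_basis[OF _ I x _ _ _ decomp])
      (use P \<phi>_closed \<phi>_add \<phi>_smult in \<open>simp_all add: right_module_iff_left_module_opposite\<close>)
qed

context ring
begin

context
  fixes e assumes e: "e \<in> carrier R" "e \<otimes> e = e"
begin

lemma right_projective_right_corner_module_if_dual_basis: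
  assumes I: "finite I"
    and x: "\<And>i. i \<in> I \<Longrightarrow> x i \<in> carrier (right_corner_module R e)"
    and \<phi>_closed: "\<And>i y. i \<in> I \<Longrightarrow> y \<in> carrier (right_corner_module R e) \<Longrightarrow>
      \<phi> i y \<in> carrier (corner_ring R e)"
    and \<phi>_add: "\<And>i y z. i \<in> I \<Longrightarrow> y \<in> carrier (right_corner_module R e) \<Longrightarrow>
      z \<in> carrier (right_corner_module R e) \<Longrightarrow> \<phi> i (y \<oplus> z) = \<phi> i y \<oplus> \<phi> i z"
    and \<phi>_mult: "\<And>i y b. i \<in> I \<Longrightarrow> y \<in> carrier (right_corner_module R e) \<Longrightarrow>
      b \<in> carrier (corner_ring R e) \<Longrightarrow> \<phi> i (y \<otimes> b) = \<phi> i y \<otimes> b"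
    and decomp: "\<And>y. y \<in> carrier (right_corner_module R e) \<Longrightarrow> y = (\<Oplus>i\<in>I. x i \<otimes> \<phi> i y)"
  shows "right_projective (corner_ring R e) (right_corner_module R e) TYPE('m) TYPE('n)"
proof (rule right_projective_if_dual_basis[OF right_module_right_corner_module[OF e] I x])
  note S = corner_ring_simps(2-5) right_corner_module_simps(2-4)
  fix y assume y: "y \<in> carrier (right_corner_module R e)"
  have terms: "(\<lambda>i. \<phi> i y \<odot>\<^bsub>right_corner_module R e\<^esub> x i) \<in> I \<rightarrow> carrier (right_corner_module R e)"
    using right_module_right_corner_module[OF e] x \<phi>_closed[OF _ y] by (auto simp: right_module_def)
  have "(\<Oplus>\<^bsub>right_corner_module R e\<^esub>i\<in>I. \<phi> i y \<odot>\<^bsub>right_corner_module R e\<^esub> x i) =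
      (\<Oplus>i\<in>I. \<phi> i y \<odot>\<^bsub>right_corner_module R e\<^esub> x i)"
    using right_module_right_corner_module[OF e] terms
    by (intro finsum_substructure[OF is_abelian_group _ _ _ _ I])
      (auto simp: right_module_def S right_corner_module_carrier_iff[OF e])
  then show "y = (\<Oplus>\<^bsub>right_corner_module R e\<^esub>i\<in>I. \<phi> i y \<odot>\<^bsub>right_corner_module R e\<^esub> x i)"
    by (simp add: S decomp[OF y, symmetric])
qed (simp_all add: corner_ring_simps(2-5) right_corner_module_simps(2-4) \<phi>_closed \<phi>_add \<phi>_mult)

lemma left_projective_left_corner_module_if_dual_basis:
  assumes I: "finite I"
    and x: "\<And>i. i \<in> I \<Longrightarrow> x i \<in> carrier (left_corner_module R e)"
    and \<phi>_closed: "\<And>i y. i \<in> I \<Longrightarrow> y \<in> carrier (left_corner_module R e) \<Longrightarrow>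
      \<phi> i y \<in> carrier (corner_ring R e)"
    and \<phi>_add: "\<And>i y z. i \<in> I \<Longrightarrow> y \<in> carrier (left_corner_module R e) \<Longrightarrow>
      z \<in> carrier (left_corner_module R e) \<Longrightarrow> \<phi> i (y \<oplus> z) = \<phi> i y \<oplus> \<phi> i z"
    and \<phi>_mult: "\<And>i y b. i \<in> I \<Longrightarrow> y \<in> carrier (left_corner_module R e) \<Longrightarrow>
      b \<in> carrier (corner_ring R e) \<Longrightarrow> \<phi> i (b \<otimes> y) = b \<otimes> \<phi> i y"
    and decomp: "\<And>y. y \<in> carrier (left_corner_module R e) \<Longrightarrow> y = (\<Oplus>i\<in>I. \<phi> i y \<otimes> x i)"
  shows "left_projective (corner_ring R e) (left_corner_module R e) TYPE('m) TYPE('n)"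
proof (rule left_projective_if_dual_basis[OF left_module_left_corner_module[OF e] I x])
  note S = corner_ring_simps(2-5) left_corner_module_simps(2-4)
  fix y assume y: "y \<in> carrier (left_corner_module R e)"
  have terms: "(\<lambda>i. \<phi> i y \<odot>\<^bsub>left_corner_module R e\<^esub> x i) \<in> I \<rightarrow> carrier (left_corner_module R e)"
    using left_module_left_corner_module[OF e] x \<phi>_closed[OF _ y] by (auto simp: left_module_def)
  have "(\<Oplus>\<^bsub>left_corner_module R e\<^esub>i\<in>I. \<phi> i y \<odot>\<^bsub>left_corner_module R e\<^esub> x i) =
      (\<Oplus>i\<in>I. \<phi> i y \<odot>\<^bsub>left_corner_module R e\<^esub> x i)"
    using left_module_left_corner_module[OF e] terms
    by (intro finsum_substructure[OF is_abelian_group _ _ _ _ I])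
      (auto simp: left_module_def S left_corner_module_carrier_iff[OF e])
  then show "y = (\<Oplus>\<^bsub>left_corner_module R e\<^esub>i\<in>I. \<phi> i y \<odot>\<^bsub>left_corner_module R e\<^esub> x i)"
    by (simp add: S decomp[OF y, symmetric])
qed (simp_all add: corner_ring_simps(2-5) left_corner_module_simps(2-4) \<phi>_closed \<phi>_add \<phi>_mult)

end

end

lemma (in ring) genideal_induct [consumes 2, case_names generator zero add a_inv l_mult r_mult]:
  assumes "S \<subseteq> carrier R" "y \<in> Idl S"
    and generator: "\<And>s. s \<in> S \<Longrightarrow> P s"
    and zero: "P \<zero>"
    and add: "\<And>x y. x \<in> Idl S \<Longrightarrow> y \<in> Idl S \<Longrightarrow> P x \<Longrightarrow> P y \<Longrightarrow> P (x \<oplus> y)"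
    and a_inv: "\<And>x. x \<in> Idl S \<Longrightarrow> P x \<Longrightarrow> P (\<ominus> x)"
    and l_mult: "\<And>x y. x \<in> carrier R \<Longrightarrow> y \<in> Idl S \<Longrightarrow> P y \<Longrightarrow> P (x \<otimes> y)"
    and r_mult: "\<And>x y. x \<in> carrier R \<Longrightarrow> y \<in> Idl S \<Longrightarrow> P y \<Longrightarrow> P (y \<otimes> x)"
  shows "P y"
proof -
  interpret K: ideal "Idl S" R
    by (rule genideal_ideal[OF assms(1)])
  have "ideal {y \<in> Idl S. P y} R"
  proof (rule idealI[OF ring_axioms])
    show "subgroup {y \<in> Idl S. P y} (add_monoid R)"
      by (rule subgroup.intro) (use K.a_subset in \<open>auto simp: zero add a_inv a_inv_def[symmetric]\<close>)
  qed (auto simp: l_mult r_mult K.I_l_closed K.I_r_closed)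
  moreover have "S \<subseteq> {y \<in> Idl S. P y}"
    using genideal_self[OF assms(1)] generator by auto
  ultimately show ?thesis
    using genideal_minimal assms(2) by blast
qed

lemma (in ideal) rcos_eq_additive_map:
  assumes F: "F \<in> carrier R \<rightarrow> carrier R" "\<And>x y. x \<in> carrier R \<Longrightarrow> y \<in> carrier R \<Longrightarrow> F (x \<oplus> y) = F x \<oplus> F y"
    and FI: "\<And>x. x \<in> I \<Longrightarrow> F x \<in> I"
    and xy: "x \<in> carrier R" "y \<in> carrier R" "I +> x = I +> y"
  shows "I +> F x = I +> F y"
proof -
  interpret abelian_group_hom R R F
    using F by (intro abelian_group_homI group_hom.intro group_hom_axioms.intro)
      (auto simp: abelian_group.a_group is_abelian_group hom_def)
  have "x \<ominus> y \<in> I"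
    using xy quotient_eq_iff_same_a_r_cos[OF is_ideal] by blast
  moreover have "F (x \<ominus> y) = F x \<ominus> F y"
    using xy by (simp add: a_minus_def)
  ultimately have "F x \<ominus> F y \<in> I"
    using FI by metis
  then show ?thesis
    using xy F(1) quotient_eq_iff_same_a_r_cos[OF is_ideal] by blast
qed

section \<open>Path algebras\<close>

lemma path_algebra_simps:
  "carrier (path_algebra Q) = {f. finite {p. f p \<noteq> 0} \<and> {p. f p \<noteq> 0} \<subseteq> qpaths Q}"
  "\<one>\<^bsub>path_algebra Q\<^esub> = (\<lambda>p. if snd p = [] \<and> fst p \<in> verts Q then 1 else 0)"
  "\<zero>\<^bsub>path_algebra Q\<^esub> = (\<lambda>p. 0)"
  "x \<oplus>\<^bsub>path_algebra Q\<^esub> y = (\<lambda>p. x p + y p)"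
  by (simp_all add: path_algebra_def)

lemma path_algebra_mult_apply:
  "(f \<otimes>\<^bsub>path_algebra Q\<^esub> g) (v, xs) =
     (\<Sum>k\<in>{0..length xs}. f (v, take k xs) * g (ptgt Q (v, take k xs), drop k xs))"
  by (simp add: path_algebra_def)

lemma ptgt_Nil [simp]: "ptgt Q (v, []) = v"
  by (simp add: ptgt_def)

lemma ptgt_Cons [simp]: "ptgt Q (v, a # xs) = ptgt Q (tgt Q a, xs)"
  by (simp add: ptgt_def)

lemma ptgt_append: "ptgt Q (v, xs @ ys) = ptgt Q (ptgt Q (v, xs), ys)"
  by (induction xs arbitrary: v) auto

lemma composable_append:
  "composable Q v (xs @ ys) \<longleftrightarrow> composable Q v xs \<and> composable Q (ptgt Q (v, xs)) ys"
  by (induction xs arbitrary: v) auto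

lemma mem_qpaths_iff: "(v, xs) \<in> qpaths Q \<longleftrightarrow> v \<in> verts Q \<and> set xs \<subseteq> arrs Q \<and> composable Q v xs"
  by (simp add: qpaths_def)

lemma ptgt_in_verts:
  assumes "(v, xs) \<in> qpaths Q" "\<forall>a\<in>arrs Q. tgt Q a \<in> verts Q"
  shows "ptgt Q (v, xs) \<in> verts Q"
  using assms by (cases xs rule: rev_cases) (auto simp: mem_qpaths_iff ptgt_def)

lemma qpaths_append_iff:
  assumes "\<forall>a\<in>arrs Q. tgt Q a \<in> verts Q"
  shows "(v, xs @ ys) \<in> qpaths Q \<longleftrightarrow> (v, xs) \<in> qpaths Q \<and> (ptgt Q (v, xs), ys) \<in> qpaths Q"
  using assms ptgt_in_verts[of v xs Q] by (auto simp: mem_qpaths_iff composable_append)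

lemma sum_eq_single:
  assumes "finite A" "a \<in> A" "\<And>b. b \<in> A \<Longrightarrow> b \<noteq> a \<Longrightarrow> g b = 0"
  shows "sum g A = g a"
  using assms sum.remove[of A a g] sum.neutral[of "A - {a}" g] by auto

definition vtx_sum :: "'v set \<Rightarrow> ('v, 'a) qpath \<Rightarrow> 'k::field" where
  "vtx_sum E = (\<lambda>p. if snd p = [] \<and> fst p \<in> E then 1 else 0)"

lemma one_path_algebra_eq: "\<one>\<^bsub>path_algebra Q\<^esub> = vtx_sum (verts Q)"
  by (simp add: path_algebra_simps vtx_sum_def)

lemma vtx_eq_vtx_sum: "vtx u = vtx_sum {u}"
  by (auto simp: vtx_def pel_def vtx_sum_def)

lemma vtx_sum_mult_apply:
  "(vtx_sum E \<otimes>\<^bsub>path_algebra Q\<^esub> f) p = (if fst p \<in> E then f p else (0::'k::field))"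
proof -
  obtain v xs where p: "p = (v, xs)" by (cases p)
  have "(vtx_sum E \<otimes>\<^bsub>path_algebra Q\<^esub> f) (v, xs) = vtx_sum E (v, []) * f (v, xs)"
    unfolding path_algebra_mult_apply by (subst sum_eq_single[of _ 0]) (auto simp: vtx_sum_def)
  then show ?thesis by (simp add: p vtx_sum_def)
qed

lemma mult_vtx_sum_apply:
  "(f \<otimes>\<^bsub>path_algebra Q\<^esub> vtx_sum E) p = (if ptgt Q p \<in> E then f p else (0::'k::field))"
proof -
  obtain v xs where p: "p = (v, xs)" by (cases p)
  have "(f \<otimes>\<^bsub>path_algebra Q\<^esub> vtx_sum E) (v, xs) = f (v, xs) * vtx_sum E (ptgt Q (v, xs), [])"
    unfolding path_algebra_mult_apply
    by (subst sum_eq_single[of _ "length xs"]) (auto simp: vtx_sum_def)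
  then show ?thesis by (simp add: p vtx_sum_def)
qed

lemma path_algebra_mult_nonzero:
  assumes "(f \<otimes>\<^bsub>path_algebra Q\<^esub> g) (v, xs) \<noteq> 0"
  obtains k where "f (v, take k xs) \<noteq> 0" "g (ptgt Q (v, take k xs), drop k xs) \<noteq> (0::'k::field)"
proof -
  obtain k where "f (v, take k xs) * g (ptgt Q (v, take k xs), drop k xs) \<noteq> 0"
    using assms unfolding path_algebra_mult_apply by (meson sum.not_neutral_contains_not_neutral)
  then show thesis using that by auto
qed

lemma path_algebra_mult_closed:
  assumes tgt: "\<forall>a\<in>arrs Q. tgt Q a \<in> verts Q"
    and f: "f \<in> carrier (path_algebra Q)" and g: "g \<in> carrier (path_algebra Q)"
  shows "(f \<otimes>\<^bsub>path_algebra Q\<^esub> g :: ('v, 'a) qpath \<Rightarrow> 'k::field) \<in> carrier (path_algebra Q)"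
proof -
  let ?F = "{p. f p \<noteq> 0}" and ?G = "{p. g p \<noteq> 0}"
  have FG: "finite ?F" "finite ?G" "?F \<subseteq> qpaths Q" "?G \<subseteq> qpaths Q"
    using f g by (auto simp: path_algebra_simps)
  have supp: "p \<in> (\<lambda>(a, b). (fst a, snd a @ snd b)) ` (?F \<times> ?G) \<and> p \<in> qpaths Q"
    if nz: "(f \<otimes>\<^bsub>path_algebra Q\<^esub> g) p \<noteq> 0" for p
  proof -
    obtain v xs where p: "p = (v, xs)" by (cases p)
    obtain k where k: "f (v, take k xs) \<noteq> 0" "g (ptgt Q (v, take k xs), drop k xs) \<noteq> 0"
      using nz unfolding p by (rule path_algebra_mult_nonzero)
    have "p \<in> (\<lambda>(a, b). (fst a, snd a @ snd b)) ` (?F \<times> ?G)"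
      using k by (intro image_eqI[of _ _ "((v, take k xs), (ptgt Q (v, take k xs), drop k xs))"]) (auto simp: p)
    then show ?thesis
      using k FG qpaths_append_iff[OF tgt, of v "take k xs" "drop k xs"] by (auto simp: p)
  qed
  have "finite {p. (f \<otimes>\<^bsub>path_algebra Q\<^esub> g) p \<noteq> 0}"
    by (rule finite_subset[of _ "(\<lambda>(a, b). (fst a, snd a @ snd b)) ` (?F \<times> ?G)"]) (use supp FG in auto)
  then show ?thesis
    using supp by (auto simp: path_algebra_simps)
qed

text \<open>Both sides of associativity expand to the sum over all splittings of a path into three pieces.\<close>
lemma path_algebra_mult_mult_apply:
  "((f \<otimes>\<^bsub>path_algebra Q\<^esub> g) \<otimes>\<^bsub>path_algebra Q\<^esub> h) (v, xs) =
    (\<Sum>k\<in>{0..length xs}. \<Sum>l\<in>{l\<in>{0..length xs}. l \<le> k}.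
      f (v, take l xs) * g (ptgt Q (v, take l xs), take (k - l) (drop l xs)) *
        h (ptgt Q (v, take k xs), drop k xs))"
  unfolding path_algebra_mult_apply sum_distrib_right
proof (rule sum.cong[OF refl])
  fix k assume k: "k \<in> {0..length xs}"
  then have "{0..length (take k xs)} = {l\<in>{0..length xs}. l \<le> k}"
    by auto
  moreover have "take l (take k xs) = take l xs" "drop l (take k xs) = take (k - l) (drop l xs)"
    if "l \<le> k" for l
    using that by (simp_all add: min_def take_drop)
  ultimately show "(\<Sum>l\<in>{0..length (take k xs)}. f (v, take l (take k xs)) *
      g (ptgt Q (v, take l (take k xs)), drop l (take k xs)) * h (ptgt Q (v, take k xs), drop k xs)) =
    (\<Sum>l\<in>{l\<in>{0..length xs}. l \<le> k}.
      f (v, take l xs) * g (ptgt Q (v, take l xs), take (k - l) (drop l xs)) *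
        h (ptgt Q (v, take k xs), drop k xs))"
    by (auto intro!: sum.cong)
qed

lemma path_algebra_mult_mult_apply':
  "(f \<otimes>\<^bsub>path_algebra Q\<^esub> (g \<otimes>\<^bsub>path_algebra Q\<^esub> h)) (v, xs) =
    (\<Sum>l\<in>{0..length xs}. \<Sum>k\<in>{k\<in>{0..length xs}. l \<le> k}.
      f (v, take l xs) * g (ptgt Q (v, take l xs), take (k - l) (drop l xs)) *
        h (ptgt Q (v, take k xs), drop k xs))"
  unfolding path_algebra_mult_apply sum_distrib_left
proof (rule sum.cong[OF refl])
  fix l assume "l \<in> {0..length xs}"
  then have shift: "{k\<in>{0..length xs}. l \<le> k} = {0 + l..length (drop l xs) + l}"
    by auto
  have "take (m + l) xs = take l xs @ take m (drop l xs)" "drop m (drop l xs) = drop (m + l) xs" for m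
    by (simp_all add: take_add add.commute[of m l])
  then show "(\<Sum>m\<in>{0..length (drop l xs)}. f (v, take l xs) * (g (ptgt Q (v, take l xs), take m (drop l xs)) *
      h (ptgt Q (ptgt Q (v, take l xs), take m (drop l xs)), drop m (drop l xs)))) =
    (\<Sum>k\<in>{k\<in>{0..length xs}. l \<le> k}.
      f (v, take l xs) * g (ptgt Q (v, take l xs), take (k - l) (drop l xs)) *
        h (ptgt Q (v, take k xs), drop k xs))"
    unfolding shift sum.shift_bounds_cl_nat_ivl by (simp add: ptgt_append mult.assoc)
qed

lemma path_algebra_mult_assoc:
  fixes f g h :: "('v, 'a) qpath \<Rightarrow> 'k::field"
  shows "(f \<otimes>\<^bsub>path_algebra Q\<^esub> g) \<otimes>\<^bsub>path_algebra Q\<^esub> h =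
     f \<otimes>\<^bsub>path_algebra Q\<^esub> (g \<otimes>\<^bsub>path_algebra Q\<^esub> h)"
proof
  fix p :: "('v, 'a) qpath"
  obtain v xs where p: "p = (v, xs)" by (cases p)
  show "((f \<otimes>\<^bsub>path_algebra Q\<^esub> g) \<otimes>\<^bsub>path_algebra Q\<^esub> h) p =
      (f \<otimes>\<^bsub>path_algebra Q\<^esub> (g \<otimes>\<^bsub>path_algebra Q\<^esub> h)) p"
    unfolding p path_algebra_mult_mult_apply path_algebra_mult_mult_apply'
    by (rule sum.swap_restrict) simp_all
qed

lemma path_algebra_one_mult:
  "f \<in> carrier (path_algebra Q) \<Longrightarrow> \<one>\<^bsub>path_algebra Q\<^esub> \<otimes>\<^bsub>path_algebra Q\<^esub> f = (f :: _ \<Rightarrow> 'k::field)"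
  unfolding one_path_algebra_eq
  by (rule ext, subst vtx_sum_mult_apply) (auto simp: path_algebra_simps qpaths_def)

lemma path_algebra_mult_one:
  assumes "\<forall>a\<in>arrs Q. tgt Q a \<in> verts Q"
  shows "f \<in> carrier (path_algebra Q) \<Longrightarrow> f \<otimes>\<^bsub>path_algebra Q\<^esub> \<one>\<^bsub>path_algebra Q\<^esub> = (f :: _ \<Rightarrow> 'k::field)"
  unfolding one_path_algebra_eq
  by (rule ext, subst mult_vtx_sum_apply) (auto simp: path_algebra_simps ptgt_in_verts[OF _ assms])

lemma path_algebra_distribs:
  fixes x y z :: "('v, 'a) qpath \<Rightarrow> 'k::field"
  shows "(x \<oplus>\<^bsub>path_algebra Q\<^esub> y) \<otimes>\<^bsub>path_algebra Q\<^esub> z =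
      x \<otimes>\<^bsub>path_algebra Q\<^esub> z \<oplus>\<^bsub>path_algebra Q\<^esub> y \<otimes>\<^bsub>path_algebra Q\<^esub> z"
    and "z \<otimes>\<^bsub>path_algebra Q\<^esub> (x \<oplus>\<^bsub>path_algebra Q\<^esub> y) =
      z \<otimes>\<^bsub>path_algebra Q\<^esub> x \<oplus>\<^bsub>path_algebra Q\<^esub> z \<otimes>\<^bsub>path_algebra Q\<^esub> y"
  by (rule ext, rename_tac p, case_tac p, simp add: path_algebra_mult_apply path_algebra_simps sum.distrib algebra_simps)+

lemma ring_path_algebra:
  assumes finV: "finite (verts Q)" and tgt: "\<forall>a\<in>arrs Q. tgt Q a \<in> verts Q"
  shows "ring (path_algebra Q :: (('v, 'a) qpath \<Rightarrow> 'k::field) ring)"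
proof (rule ringI)
  show "abelian_group (path_algebra Q :: (('v, 'a) qpath \<Rightarrow> 'k::field) ring)"
  proof (rule abelian_groupI)
    fix x y :: "('v, 'a) qpath \<Rightarrow> 'k"
    assume "x \<in> carrier (path_algebra Q)" "y \<in> carrier (path_algebra Q)"
    moreover have "{p. x p + y p \<noteq> 0} \<subseteq> {p. x p \<noteq> 0} \<union> {p. y p \<noteq> 0}" by auto
    ultimately show "x \<oplus>\<^bsub>path_algebra Q\<^esub> y \<in> carrier (path_algebra Q)"
      by (auto simp: path_algebra_simps intro: finite_subset)
  next
    fix x :: "('v, 'a) qpath \<Rightarrow> 'k"
    assume "x \<in> carrier (path_algebra Q)"
    then show "\<exists>y\<in>carrier (path_algebra Q). y \<oplus>\<^bsub>path_algebra Q\<^esub> x = \<zero>\<^bsub>path_algebra Q\<^esub>"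
      by (intro bexI[of _ "\<lambda>p. - x p"]) (auto simp: path_algebra_simps)
  qed (auto simp: path_algebra_simps algebra_simps)
next
  have "{p. (\<one>\<^bsub>path_algebra Q\<^esub> :: _ \<Rightarrow> 'k) p \<noteq> 0} = (\<lambda>v. (v, [])) ` verts Q"
    by (auto simp: path_algebra_simps)
  then have "\<one>\<^bsub>path_algebra Q\<^esub> \<in> carrier (path_algebra Q :: (_ \<Rightarrow> 'k) ring)"
    using finV by (auto simp: path_algebra_simps qpaths_def)
  then show "monoid (path_algebra Q :: (('v, 'a) qpath \<Rightarrow> 'k::field) ring)"
    by (intro monoidI)
      (simp_all add: path_algebra_mult_closed[OF tgt] path_algebra_mult_assoc
        path_algebra_one_mult path_algebra_mult_one[OF tgt])
qed (simp_all add: path_algebra_distribs)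

lemma pel_mult_apply:
  "(pel (u, ps) \<otimes>\<^bsub>path_algebra Q\<^esub> f) (v, xs) =
     (if v = u \<and> take (length ps) xs = ps then f (ptgt Q (u, ps), drop (length ps) xs) else (0::'k::field))"
proof (cases "v = u \<and> take (length ps) xs = ps")
  case True
  then have "length ps \<le> length xs"
    using length_take[of "length ps" xs] by (auto simp: min_def split: if_splits)
  with True show ?thesis
    unfolding path_algebra_mult_apply
    by (subst sum_eq_single[of _ "length ps"]) (auto simp: pel_def)
next
  case False
  have "pel (u, ps) (v, take k xs) = (0::'k)" if "k \<le> length xs" for k
    using False that by (auto simp: pel_def)
  with False show ?thesis
    unfolding path_algebra_mult_apply by (auto intro: sum.neutral)
qed

lemma mult_pel_apply:
  "(f \<otimes>\<^bsub>path_algebra Q\<^esub> pel (w, ps)) (v, xs) =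
     (if length ps \<le> length xs \<and> drop (length xs - length ps) xs = ps \<and>
         ptgt Q (v, take (length xs - length ps) xs) = w
      then f (v, take (length xs - length ps) xs) else (0::'k::field))"
proof -
  have split_at: "k = length xs - length ps" "length ps \<le> length xs"
    if "k \<le> length xs" "drop k xs = ps" for k
    using that by auto
  have "pel (w, ps) (ptgt Q (v, take k xs), drop k xs) = (0::'k)"
    if "k \<le> length xs" "k \<noteq> length xs - length ps" for k
    using that split_at by (auto simp: pel_def)
  then show ?thesis
    unfolding path_algebra_mult_apply
    by (subst sum_eq_single[of _ "length xs - length ps"]) (auto simp: pel_def)
qed

lemma pel_mult_pel:
  fixes Q :: "('v, 'a) quiver"
  shows "pel (u, ps) \<otimes>\<^bsub>path_algebra Q\<^esub> pel (ptgt Q (u, ps), qs) = (pel (u, ps @ qs) :: _ \<Rightarrow> 'k::field)"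
proof
  fix p :: "('v, 'a) qpath"
  obtain v xs where p: "p = (v, xs)" by (cases p)
  show "(pel (u, ps) \<otimes>\<^bsub>path_algebra Q\<^esub> pel (ptgt Q (u, ps), qs)) p = (pel (u, ps @ qs) :: _ \<Rightarrow> 'k) p"
    unfolding p pel_mult_apply by (auto simp: pel_def append_eq_conv_conj, metis append_take_drop_id)
qed

lemma pel_closed: "p \<in> qpaths Q \<Longrightarrow> pel p \<in> carrier (path_algebra Q)"
  by (auto simp: path_algebra_simps pel_def)

lemma path_algebra_a_inv:
  assumes "ring (path_algebra Q :: (('v, 'a) qpath \<Rightarrow> 'k::field) ring)"
    and "f \<in> carrier (path_algebra Q :: (('v, 'a) qpath \<Rightarrow> 'k::field) ring)"
  shows "\<ominus>\<^bsub>path_algebra Q\<^esub> f = (\<lambda>p. - f p)"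
proof -
  interpret ring "path_algebra Q :: (('v, 'a) qpath \<Rightarrow> 'k::field) ring" by fact
  show ?thesis
    using assms(2) by (intro minus_equality) (auto simp: path_algebra_simps)
qed

lemma path_algebra_mult_apply_Nil:
  "(f \<otimes>\<^bsub>path_algebra Q\<^esub> g) (v, []) = f (v, []) * g (v, [])"
  by (simp add: path_algebra_mult_apply)

definition path_smult :: "'k::field \<Rightarrow> (('v, 'a) qpath \<Rightarrow> 'k) \<Rightarrow> ('v, 'a) qpath \<Rightarrow> 'k" where
  "path_smult c f = (\<lambda>p. c * f p)"

lemma path_smult_mult:
  "path_smult c x \<otimes>\<^bsub>path_algebra Q\<^esub> y = path_smult c (x \<otimes>\<^bsub>path_algebra Q\<^esub> y)"
  by (rule ext, rename_tac p, case_tac p)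
    (simp add: path_algebra_mult_apply path_smult_def sum_distrib_left mult.assoc)

lemma path_smult_closed: "f \<in> carrier (path_algebra Q) \<Longrightarrow> path_smult c f \<in> carrier (path_algebra Q)"
  by (auto simp: path_algebra_simps path_smult_def intro: finite_subset[of _ "{p. f p \<noteq> 0}"])

lemma path_smult_closed_ideal:
  assumes "ideal K (path_algebra Q)" "f \<in> K"
  shows "path_smult c f \<in> K"
proof -
  interpret ideal K "path_algebra Q" by fact
  have "path_smult c f = path_smult c \<one>\<^bsub>path_algebra Q\<^esub> \<otimes>\<^bsub>path_algebra Q\<^esub> f"
    using assms(2) a_Hcarr by (simp add: path_smult_mult)
  also have "\<dots> \<in> K"
    using assms(2) by (intro I_l_closed path_smult_closed one_closed)
  finally show ?thesis .
qed

section \<open>Stripping arrows\<close>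

definition starts_in :: "'v set \<Rightarrow> (('v, 'a) qpath \<Rightarrow> 'k::field) \<Rightarrow> bool" where
  "starts_in E f \<longleftrightarrow> (\<forall>p. f p \<noteq> 0 \<longrightarrow> fst p \<in> E)"

definition ends_in :: "('v, 'a) quiver \<Rightarrow> 'v set \<Rightarrow> (('v, 'a) qpath \<Rightarrow> 'k::field) \<Rightarrow> bool" where
  "ends_in Q E f \<longleftrightarrow> (\<forall>p. f p \<noteq> 0 \<longrightarrow> ptgt Q p \<in> E)"

lemma vtx_sum_mult_eq_if_starts_in: "starts_in E f \<Longrightarrow> vtx_sum E \<otimes>\<^bsub>path_algebra Q\<^esub> f = f"
  by (rule ext) (auto simp: vtx_sum_mult_apply starts_in_def)

lemma mult_vtx_sum_eq_if_ends_in: "ends_in Q E f \<Longrightarrow> f \<otimes>\<^bsub>path_algebra Q\<^esub> vtx_sum E = f"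
  by (rule ext) (auto simp: mult_vtx_sum_apply ends_in_def)

lemma starts_in_vtx_sum_mult: "starts_in E (vtx_sum E \<otimes>\<^bsub>path_algebra Q\<^esub> f)"
  by (auto simp: starts_in_def vtx_sum_mult_apply split: if_splits)

lemma ends_in_mult_vtx_sum: "ends_in Q E (f \<otimes>\<^bsub>path_algebra Q\<^esub> vtx_sum E)"
  by (auto simp: ends_in_def mult_vtx_sum_apply split: if_splits)

lemma ends_in_vtx_sum_mult: "ends_in Q E f \<Longrightarrow> ends_in Q E (vtx_sum E' \<otimes>\<^bsub>path_algebra Q\<^esub> f)"
  by (auto simp: ends_in_def vtx_sum_mult_apply split: if_splits)

lemma starts_in_mult_vtx_sum: "starts_in E f \<Longrightarrow> starts_in E (f \<otimes>\<^bsub>path_algebra Q\<^esub> vtx_sum E')"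
  by (auto simp: starts_in_def mult_vtx_sum_apply split: if_splits)

lemma vtx_sum_idem: "vtx_sum E \<otimes>\<^bsub>path_algebra Q\<^esub> vtx_sum E = vtx_sum E"
  by (rule ext, simp only: vtx_sum_mult_apply) (simp add: vtx_sum_def)

definition strip_head :: "('v, 'a) quiver \<Rightarrow> 'v \<Rightarrow> 'a \<Rightarrow> (('v, 'a) qpath \<Rightarrow> 'k::field) \<Rightarrow> ('v, 'a) qpath \<Rightarrow> 'k" where
  "strip_head Q u a f = (\<lambda>q. if fst q = tgt Q a then f (u, a # snd q) else 0)"

definition strip_last :: "('v, 'a) quiver \<Rightarrow> 'a \<Rightarrow> (('v, 'a) qpath \<Rightarrow> 'k::field) \<Rightarrow> ('v, 'a) qpath \<Rightarrow> 'k" where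
  "strip_last Q a f = (\<lambda>q. if ptgt Q q = src Q a then f (fst q, snd q @ [a]) else 0)"

lemma strip_head_closed:
  assumes "\<forall>a\<in>arrs Q. tgt Q a \<in> verts Q" "f \<in> carrier (path_algebra Q)"
  shows "strip_head Q u a f \<in> carrier (path_algebra Q)"
proof -
  have "{q. strip_head Q u a f q \<noteq> 0} \<subseteq> (\<lambda>q. (tgt Q a, tl (snd q))) ` {p. f p \<noteq> 0}"
    by (auto simp: strip_head_def intro!: image_eqI)
  moreover have "q \<in> qpaths Q" if "strip_head Q u a f q \<noteq> 0" for q
  proof -
    have q: "fst q = tgt Q a" "f (u, a # snd q) \<noteq> 0"
      using that by (auto simp: strip_head_def split: if_splits)
    then have "(u, a # snd q) \<in> qpaths Q"
      using assms(2) by (auto simp: path_algebra_simps)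
    then show ?thesis
      using q assms(1) by (cases q) (auto simp: mem_qpaths_iff)
  qed
  ultimately show ?thesis
    using assms(2) by (auto simp: path_algebra_simps intro: finite_subset)
qed

lemma strip_last_closed:
  assumes "\<forall>a\<in>arrs Q. tgt Q a \<in> verts Q" "f \<in> carrier (path_algebra Q)"
  shows "strip_last Q a f \<in> carrier (path_algebra Q)"
proof -
  have "{q. strip_last Q a f q \<noteq> 0} \<subseteq> (\<lambda>q. (fst q, butlast (snd q))) ` {p. f p \<noteq> 0}"
    by (auto simp: strip_last_def intro!: image_eqI)
  moreover have "q \<in> qpaths Q" if "strip_last Q a f q \<noteq> 0" for q
  proof -
    have "(fst q, snd q @ [a]) \<in> qpaths Q"
      using that assms(2) by (auto simp: strip_last_def path_algebra_simps split: if_splits)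
    then show ?thesis
      using qpaths_append_iff[OF assms(1)] by (cases q) auto
  qed
  ultimately show ?thesis
    using assms(2) by (auto simp: path_algebra_simps intro: finite_subset)
qed

lemma strip_head_add:
  "strip_head Q u a (x \<oplus>\<^bsub>path_algebra Q\<^esub> y) = strip_head Q u a x \<oplus>\<^bsub>path_algebra Q\<^esub> strip_head Q u a y"
  by (auto simp: strip_head_def path_algebra_simps)

lemma strip_last_add:
  "strip_last Q a (x \<oplus>\<^bsub>path_algebra Q\<^esub> y) = strip_last Q a x \<oplus>\<^bsub>path_algebra Q\<^esub> strip_last Q a y"
  by (auto simp: strip_last_def path_algebra_simps)

lemma strip_head_uminus: "strip_head Q u a (\<lambda>p. - x p) = (\<lambda>p. - strip_head Q u a x p)"
  by (rule ext) (simp add: strip_head_def)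

lemma strip_last_uminus: "strip_last Q a (\<lambda>p. - x p) = (\<lambda>p. - strip_last Q a x p)"
  by (rule ext) (simp add: strip_last_def)

lemma strip_head_mult:
  fixes x y :: "('v, 'a) qpath \<Rightarrow> 'k::field"
  shows "strip_head Q u a (x \<otimes>\<^bsub>path_algebra Q\<^esub> y) =
     strip_head Q u a x \<otimes>\<^bsub>path_algebra Q\<^esub> y \<oplus>\<^bsub>path_algebra Q\<^esub> path_smult (x (u, [])) (strip_head Q u a y)"
proof
  fix q :: "('v, 'a) qpath"
  obtain w qs where q: "q = (w, qs)" by (cases q)
  show "strip_head Q u a (x \<otimes>\<^bsub>path_algebra Q\<^esub> y) q =
     (strip_head Q u a x \<otimes>\<^bsub>path_algebra Q\<^esub> y \<oplus>\<^bsub>path_algebra Q\<^esub> path_smult (x (u, [])) (strip_head Q u a y)) q"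
  proof (cases "w = tgt Q a")
    case True
    have "strip_head Q u a (x \<otimes>\<^bsub>path_algebra Q\<^esub> y) q = (x \<otimes>\<^bsub>path_algebra Q\<^esub> y) (u, a # qs)"
      by (simp add: strip_head_def q True)
    also have "\<dots> = x (u, []) * y (u, a # qs) +
        (\<Sum>k\<in>{0..length qs}. x (u, a # take k qs) * y (ptgt Q (tgt Q a, take k qs), drop k qs))"
      by (simp only: path_algebra_mult_apply length_Cons sum.atLeast0_atMost_Suc_shift) simp
    finally show ?thesis
      by (simp add: q path_algebra_mult_apply path_algebra_simps path_smult_def strip_head_def True)
  next
    case False
    then show ?thesis
      by (simp add: q path_algebra_mult_apply path_algebra_simps path_smult_def strip_head_def)
  qed
qed

lemma strip_last_mult:
  fixes x y :: "('v, 'a) qpath \<Rightarrow> 'k::field"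
  shows "strip_last Q a (x \<otimes>\<^bsub>path_algebra Q\<^esub> y) =
     x \<otimes>\<^bsub>path_algebra Q\<^esub> strip_last Q a y \<oplus>\<^bsub>path_algebra Q\<^esub> path_smult (y (tgt Q a, [])) (strip_last Q a x)"
proof
  fix q :: "('v, 'a) qpath"
  obtain v qs where q: "q = (v, qs)" by (cases q)
  have ptgt_split: "ptgt Q (ptgt Q (v, take k qs), drop k qs) = ptgt Q (v, qs)" for k
    using ptgt_append[of Q v "take k qs" "drop k qs"] by simp
  show "strip_last Q a (x \<otimes>\<^bsub>path_algebra Q\<^esub> y) q =
     (x \<otimes>\<^bsub>path_algebra Q\<^esub> strip_last Q a y \<oplus>\<^bsub>path_algebra Q\<^esub> path_smult (y (tgt Q a, [])) (strip_last Q a x)) q"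
  proof (cases "ptgt Q (v, qs) = src Q a")
    case True
    have "strip_last Q a (x \<otimes>\<^bsub>path_algebra Q\<^esub> y) q = (x \<otimes>\<^bsub>path_algebra Q\<^esub> y) (v, qs @ [a])"
      by (simp add: strip_last_def q True)
    also have "\<dots> = (\<Sum>k\<in>{0..length qs}. x (v, take k qs) * y (ptgt Q (v, take k qs), drop k qs @ [a]))
        + x (v, qs @ [a]) * y (tgt Q a, [])"
      unfolding path_algebra_mult_apply by (simp add: sum.atLeast0_atMost_Suc ptgt_append)
    finally show ?thesis
      by (simp add: q path_algebra_mult_apply path_algebra_simps path_smult_def strip_last_def True ptgt_split)
  next
    case False
    then show ?thesis
      by (simp add: q path_algebra_mult_apply path_algebra_simps path_smult_def strip_last_def ptgt_split)
  qed
qed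

lemma path_smult_zero: "x \<oplus>\<^bsub>path_algebra Q\<^esub> path_smult 0 y = x"
  by (auto simp: path_algebra_simps path_smult_def)

context
  fixes Q :: "('v, 'a) quiver"
  assumes R: "ring (path_algebra Q :: (('v, 'a) qpath \<Rightarrow> 'k::field) ring)"
    and tgt: "\<forall>a\<in>arrs Q. tgt Q a \<in> verts Q"
begin

lemma strip_head_a_inv:
  "x \<in> carrier (path_algebra Q) \<Longrightarrow>
    strip_head Q u a (\<ominus>\<^bsub>path_algebra Q\<^esub> x) = \<ominus>\<^bsub>path_algebra Q\<^esub> strip_head Q u a (x :: _ \<Rightarrow> 'k)"
  by (simp add: path_algebra_a_inv[OF R] strip_head_closed[OF tgt] strip_head_uminus)

lemma strip_last_a_inv:
  "x \<in> carrier (path_algebra Q) \<Longrightarrow>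
    strip_last Q a (\<ominus>\<^bsub>path_algebra Q\<^esub> x) = \<ominus>\<^bsub>path_algebra Q\<^esub> strip_last Q a (x :: _ \<Rightarrow> 'k)"
  by (simp add: path_algebra_a_inv[OF R] strip_last_closed[OF tgt] strip_last_uminus)

text \<open>The induction also carries the vanishing of the coefficient at the trivial path \<open>(u, [])\<close>:
  it kills the second summand of \<open>strip_head_mult\<close> when the ideal element is the left factor.\<close>
lemma strip_head_genideal:
  fixes S :: "(('v, 'a) qpath \<Rightarrow> 'k) set"
  assumes S: "S \<subseteq> carrier (path_algebra Q)"
    and gens: "\<And>s. s \<in> S \<Longrightarrow> s (u, []) = 0 \<and> strip_head Q u a s = \<zero>\<^bsub>path_algebra Q\<^esub>"
    and f: "f \<in> genideal (path_algebra Q) S"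
  shows "strip_head Q u a f \<in> genideal (path_algebra Q) S"
proof -
  interpret ring "path_algebra Q :: (('v, 'a) qpath \<Rightarrow> 'k) ring" by (fact R)
  interpret K: ideal "genideal (path_algebra Q) S" "path_algebra Q"
    by (rule genideal_ideal[OF S])
  have "f (u, []) = 0 \<and> strip_head Q u a f \<in> genideal (path_algebra Q) S"
    using S f
  proof (induction f rule: genideal_induct)
    case (add x y)
    then have "strip_head Q u a (x \<oplus>\<^bsub>path_algebra Q\<^esub> y) \<in> genideal (path_algebra Q) S"
      by (simp add: strip_head_add K.a_closed)
    with add show ?case by (simp add: path_algebra_simps)
  next
    case (a_inv x)
    then have x: "x \<in> carrier (path_algebra Q)"
      using K.a_Hcarr by blast
    with a_inv have "strip_head Q u a (\<ominus>\<^bsub>path_algebra Q\<^esub> x) \<in> genideal (path_algebra Q) S"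
      by (simp add: strip_head_a_inv K.a_inv_closed)
    with a_inv show ?case by (simp add: path_algebra_a_inv[OF R x])
  next
    case (l_mult x y)
    then show ?case
      by (auto simp: path_algebra_mult_apply_Nil strip_head_mult
          intro!: K.a_closed K.I_l_closed path_smult_closed_ideal[OF K.ideal_axioms] strip_head_closed[OF tgt])
  next
    case (r_mult x y)
    then show ?case
      by (simp add: path_algebra_mult_apply_Nil strip_head_mult path_smult_zero K.I_r_closed strip_head_closed[OF tgt])
  next
    case zero
    have "strip_head Q u a \<zero>\<^bsub>path_algebra Q\<^esub> = (\<zero>\<^bsub>path_algebra Q\<^esub> :: _ \<Rightarrow> 'k)"
      by (simp add: strip_head_def path_algebra_simps)
    then show ?case using K.zero_closed by (simp add: path_algebra_simps(3))
  qed (use gens K.zero_closed in simp)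
  then show ?thesis ..
qed

lemma strip_last_genideal:
  fixes S :: "(('v, 'a) qpath \<Rightarrow> 'k) set"
  assumes S: "S \<subseteq> carrier (path_algebra Q)"
    and gens: "\<And>s. s \<in> S \<Longrightarrow> s (tgt Q a, []) = 0 \<and> strip_last Q a s = \<zero>\<^bsub>path_algebra Q\<^esub>"
    and f: "f \<in> genideal (path_algebra Q) S"
  shows "strip_last Q a f \<in> genideal (path_algebra Q) S"
proof -
  interpret ring "path_algebra Q :: (('v, 'a) qpath \<Rightarrow> 'k) ring" by (fact R)
  interpret K: ideal "genideal (path_algebra Q) S" "path_algebra Q"
    by (rule genideal_ideal[OF S])
  have "f (tgt Q a, []) = 0 \<and> strip_last Q a f \<in> genideal (path_algebra Q) S"
    using S f
  proof (induction f rule: genideal_induct)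
    case (add x y)
    then have "strip_last Q a (x \<oplus>\<^bsub>path_algebra Q\<^esub> y) \<in> genideal (path_algebra Q) S"
      by (simp add: strip_last_add K.a_closed)
    with add show ?case by (simp add: path_algebra_simps)
  next
    case (a_inv x)
    then have x: "x \<in> carrier (path_algebra Q)"
      using K.a_Hcarr by blast
    with a_inv have "strip_last Q a (\<ominus>\<^bsub>path_algebra Q\<^esub> x) \<in> genideal (path_algebra Q) S"
      by (simp add: strip_last_a_inv K.a_inv_closed)
    with a_inv show ?case by (simp add: path_algebra_a_inv[OF R x])
  next
    case (l_mult x y)
    then show ?case
      by (simp add: path_algebra_mult_apply_Nil strip_last_mult path_smult_zero K.I_l_closed strip_last_closed[OF tgt])
  next
    case (r_mult x y)
    then show ?case
      by (auto simp: path_algebra_mult_apply_Nil strip_last_mult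
          intro!: K.a_closed K.I_r_closed path_smult_closed_ideal[OF K.ideal_axioms] strip_last_closed[OF tgt])
  next
    case zero
    have "strip_last Q a \<zero>\<^bsub>path_algebra Q\<^esub> = (\<zero>\<^bsub>path_algebra Q\<^esub> :: _ \<Rightarrow> 'k)"
      by (simp add: strip_last_def path_algebra_simps)
    then show ?case using K.zero_closed by (simp add: path_algebra_simps(3))
  qed (use gens K.zero_closed in simp)
  then show ?thesis ..
qed

end

fun strip_prefix :: "('v, 'a) quiver \<Rightarrow> 'v \<Rightarrow> 'a list \<Rightarrow> (('v, 'a) qpath \<Rightarrow> 'k::field) \<Rightarrow> ('v, 'a) qpath \<Rightarrow> 'k" where
  "strip_prefix Q u [] f = f"
| "strip_prefix Q u (a # as) f = strip_prefix Q (tgt Q a) as (strip_head Q u a f)"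

text \<open>The list \<open>rs\<close> enumerates the arrows of the suffix from the last one backwards.\<close>
fun strip_suffix :: "('v, 'a) quiver \<Rightarrow> 'a list \<Rightarrow> (('v, 'a) qpath \<Rightarrow> 'k::field) \<Rightarrow> ('v, 'a) qpath \<Rightarrow> 'k" where
  "strip_suffix Q [] f = f"
| "strip_suffix Q (a # rs) f = strip_suffix Q rs (strip_last Q a f)"

fun back_src :: "('v, 'a) quiver \<Rightarrow> 'v \<Rightarrow> 'a list \<Rightarrow> 'v" where
  "back_src Q w [] = w"
| "back_src Q w (a # rs) = back_src Q (src Q a) rs"

text \<open>Every path from \<open>u\<close> that ends in \<open>E\<close> begins with a forced exit path \<open>as\<close> from \<open>u\<close>; dually,
  every path into \<open>w\<close> that starts in \<open>E\<close> ends with a forced entry path into \<open>w\<close>.\<close>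
fun forced_exit :: "('v, 'a) quiver \<Rightarrow> 'v set \<Rightarrow> 'v \<Rightarrow> 'a list \<Rightarrow> bool" where
  "forced_exit Q E u [] = True"
| "forced_exit Q E u (a # as) \<longleftrightarrow> u \<notin> E \<and> a \<in> arrs Q \<and> src Q a = u \<and>
     (\<forall>b\<in>arrs Q. src Q b = u \<longrightarrow> b = a) \<and> forced_exit Q E (tgt Q a) as"

fun forced_entry :: "('v, 'a) quiver \<Rightarrow> 'v set \<Rightarrow> 'v \<Rightarrow> 'a list \<Rightarrow> bool" where
  "forced_entry Q E w [] = True"
| "forced_entry Q E w (a # rs) \<longleftrightarrow> w \<notin> E \<and> a \<in> arrs Q \<and> tgt Q a = w \<and>
     (\<forall>b\<in>arrs Q. tgt Q b = w \<longrightarrow> b = a) \<and> forced_entry Q E (src Q a) rs"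

lemma ptgt_back_src: "forced_entry Q E w rs \<Longrightarrow> ptgt Q (back_src Q w rs, rev rs) = w"
  by (induction rs arbitrary: w) (auto simp: ptgt_append)

lemma forced_exit_qpath:
  assumes "forced_exit Q E u as" "u \<in> verts Q"
  shows "(u, as) \<in> qpaths Q"
proof -
  have "set as \<subseteq> arrs Q \<and> composable Q u as"
    using assms(1) by (induction as arbitrary: u) auto
  then show ?thesis
    using assms(2) by (simp add: mem_qpaths_iff)
qed

lemma forced_entry_qpath:
  "forced_entry Q E w rs \<Longrightarrow> back_src Q w rs \<in> verts Q \<Longrightarrow> (back_src Q w rs, rev rs) \<in> qpaths Q"
proof (induction rs arbitrary: w)
  case (Cons a rs)
  then show ?case
    using ptgt_back_src[of Q E "src Q a" rs] by (auto simp: mem_qpaths_iff composable_append)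
qed (simp add: mem_qpaths_iff)

lemma strip_prefix_closed:
  "\<forall>a\<in>arrs Q. tgt Q a \<in> verts Q \<Longrightarrow> f \<in> carrier (path_algebra Q) \<Longrightarrow>
    strip_prefix Q u as f \<in> carrier (path_algebra Q)"
  by (induction as arbitrary: u f) (auto simp: strip_head_closed)

lemma strip_suffix_closed:
  "\<forall>a\<in>arrs Q. tgt Q a \<in> verts Q \<Longrightarrow> f \<in> carrier (path_algebra Q) \<Longrightarrow>
    strip_suffix Q rs f \<in> carrier (path_algebra Q)"
  by (induction rs arbitrary: f) (auto simp: strip_last_closed)

lemma strip_prefix_add:
  "strip_prefix Q u as (x \<oplus>\<^bsub>path_algebra Q\<^esub> y) = strip_prefix Q u as x \<oplus>\<^bsub>path_algebra Q\<^esub> strip_prefix Q u as y"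
  by (induction as arbitrary: u x y) (auto simp: strip_head_add)

lemma strip_suffix_add:
  "strip_suffix Q rs (x \<oplus>\<^bsub>path_algebra Q\<^esub> y) = strip_suffix Q rs x \<oplus>\<^bsub>path_algebra Q\<^esub> strip_suffix Q rs y"
  by (induction rs arbitrary: x y) (auto simp: strip_last_add)

lemma ends_in_strip_prefix: "ends_in Q E x \<Longrightarrow> ends_in Q E (strip_prefix Q u as x)"
proof (induction as arbitrary: u x)
  case (Cons a as)
  have "ends_in Q E (strip_head Q u a x)"
    using Cons.prems unfolding ends_in_def strip_head_def by (metis ptgt_Cons prod.collapse)
  then show ?case using Cons.IH by simp
qed simp

lemma starts_in_strip_suffix: "starts_in E x \<Longrightarrow> starts_in E (strip_suffix Q rs x)"
proof (induction rs arbitrary: x)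
  case (Cons a rs)
  have "starts_in E (strip_last Q a x)"
    using Cons.prems by (auto simp: starts_in_def strip_last_def split: if_splits)
  then show ?case using Cons.IH by simp
qed simp

lemma starts_in_strip_prefix_Cons: "starts_in {ptgt Q (u, a # as)} (strip_prefix Q u (a # as) x)"
proof (induction as arbitrary: u a x)
  case Nil
  then show ?case by (auto simp: starts_in_def strip_head_def split: if_splits)
next
  case (Cons b as)
  show ?case using Cons[of "tgt Q a" b "strip_head Q u a x"] by simp
qed

lemma ends_in_strip_suffix_Cons: "ends_in Q {back_src Q (src Q a) rs} (strip_suffix Q (a # rs) x)"
proof (induction rs arbitrary: a x)
  case Nil
  then show ?case by (auto simp: ends_in_def strip_last_def split: if_splits)
next
  case (Cons b rs)
  show ?case using Cons[of b "strip_last Q a x"] by simp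
qed

lemma strip_prefix_genideal:
  fixes Q :: "('v, 'a) quiver" and S :: "(('v, 'a) qpath \<Rightarrow> 'k::field) set"
  assumes R: "ring (path_algebra Q :: (('v, 'a) qpath \<Rightarrow> 'k) ring)"
    and tgt: "\<forall>a\<in>arrs Q. tgt Q a \<in> verts Q" and S: "S \<subseteq> carrier (path_algebra Q)"
    and S_starts: "\<And>s. s \<in> S \<Longrightarrow> starts_in E s"
  shows "forced_exit Q E u as \<Longrightarrow> f \<in> genideal (path_algebra Q) S \<Longrightarrow>
    strip_prefix Q u as f \<in> genideal (path_algebra Q) S"
proof (induction as arbitrary: u f)
  case (Cons a as)
  have "s (u, []) = 0 \<and> strip_head Q u a s = \<zero>\<^bsub>path_algebra Q\<^esub>" if "s \<in> S" for s
    using S_starts[OF that] Cons.prems(1) by (force simp: starts_in_def strip_head_def path_algebra_simps)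
  then have "strip_head Q u a f \<in> genideal (path_algebra Q) S"
    using strip_head_genideal[OF R tgt S _ Cons.prems(2)] by blast
  then show ?case using Cons by simp
qed simp

lemma strip_suffix_genideal:
  fixes Q :: "('v, 'a) quiver" and S :: "(('v, 'a) qpath \<Rightarrow> 'k::field) set"
  assumes R: "ring (path_algebra Q :: (('v, 'a) qpath \<Rightarrow> 'k) ring)"
    and tgt: "\<forall>a\<in>arrs Q. tgt Q a \<in> verts Q" and S: "S \<subseteq> carrier (path_algebra Q)"
    and S_starts: "\<And>s. s \<in> S \<Longrightarrow> starts_in E s" and S_ends: "\<And>s. s \<in> S \<Longrightarrow> ends_in Q E s"
  shows "forced_entry Q E w rs \<Longrightarrow> f \<in> genideal (path_algebra Q) S \<Longrightarrow>
    strip_suffix Q rs f \<in> genideal (path_algebra Q) S"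
proof (induction rs arbitrary: w f)
  case (Cons a rs)
  have w: "tgt Q a \<notin> E"
    using Cons.prems(1) by auto
  have "s (tgt Q a, []) = 0 \<and> strip_last Q a s = \<zero>\<^bsub>path_algebra Q\<^esub>" if "s \<in> S" for s
  proof
    show "s (tgt Q a, []) = 0"
      using S_starts[OF that] w by (force simp: starts_in_def)
    have "ptgt Q (fst q, snd q @ [a]) \<notin> E" for q
      using w by (simp add: ptgt_append)
    then show "strip_last Q a s = \<zero>\<^bsub>path_algebra Q\<^esub>"
      using S_ends[OF that] by (force simp: ends_in_def strip_last_def path_algebra_simps)
  qed
  then have "strip_last Q a f \<in> genideal (path_algebra Q) S"
    using strip_last_genideal[OF R tgt S _ Cons.prems(2)] by blast
  then show ?case
    using Cons.IH[of "src Q a"] Cons.prems(1) by simp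
qed simp

lemma strip_prefix_mult:
  "forced_exit Q E u as \<Longrightarrow> ends_in Q E z \<Longrightarrow>
    strip_prefix Q u as (z \<otimes>\<^bsub>path_algebra Q\<^esub> t) = strip_prefix Q u as z \<otimes>\<^bsub>path_algebra Q\<^esub> t"
proof (induction as arbitrary: u z)
  case (Cons a as)
  have "z (u, []) = 0"
    using Cons.prems unfolding ends_in_def by (metis forced_exit.simps(2) ptgt_Nil)
  then have "strip_head Q u a (z \<otimes>\<^bsub>path_algebra Q\<^esub> t) = strip_head Q u a z \<otimes>\<^bsub>path_algebra Q\<^esub> t"
    by (simp add: strip_head_mult path_smult_zero)
  moreover have "ends_in Q E (strip_head Q u a z)"
    using ends_in_strip_prefix[OF Cons.prems(2), of u "[a]"] by simp
  ultimately show ?case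
    using Cons.IH[of "tgt Q a"] Cons.prems(1) by simp
qed simp

lemma strip_suffix_mult:
  "forced_entry Q E w rs \<Longrightarrow> starts_in E z \<Longrightarrow>
    strip_suffix Q rs (t \<otimes>\<^bsub>path_algebra Q\<^esub> z) = t \<otimes>\<^bsub>path_algebra Q\<^esub> strip_suffix Q rs z"
proof (induction rs arbitrary: w z)
  case (Cons a rs)
  have "z (tgt Q a, []) = 0"
    using Cons.prems by (auto simp: starts_in_def)
  then have "strip_last Q a (t \<otimes>\<^bsub>path_algebra Q\<^esub> z) = t \<otimes>\<^bsub>path_algebra Q\<^esub> strip_last Q a z"
    by (simp add: strip_last_mult path_smult_zero)
  moreover have "starts_in E (strip_last Q a z)"
    using starts_in_strip_suffix[OF Cons.prems(2), of Q "[a]"] by simp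
  ultimately show ?case
    using Cons.IH[of "src Q a"] Cons.prems(1) by simp
qed simp

lemma vtx_mult_eq_pel_mult_strip_head:
  fixes Q :: "('v, 'a) quiver" and z :: "('v, 'a) qpath \<Rightarrow> 'k::field"
  assumes z: "z \<in> carrier (path_algebra Q)" "ends_in Q E z" and u: "u \<notin> E"
    and a: "\<forall>b\<in>arrs Q. src Q b = u \<longrightarrow> b = a"
  shows "vtx u \<otimes>\<^bsub>path_algebra Q\<^esub> z = pel (u, [a]) \<otimes>\<^bsub>path_algebra Q\<^esub> strip_head Q u a z"
proof
  fix p :: "('v, 'a) qpath"
  obtain v xs where p: "p = (v, xs)" by (cases p)
  have z_Nil: "z (u, []) = 0"
    using z(2) u unfolding ends_in_def by (metis ptgt_Nil)
  have z_Cons: "z (u, b # bs) = 0" if "b \<noteq> a" for b bs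
    using z(1) a that by (force simp: path_algebra_simps mem_qpaths_iff)
  show "(vtx u \<otimes>\<^bsub>path_algebra Q\<^esub> z) p = (pel (u, [a]) \<otimes>\<^bsub>path_algebra Q\<^esub> strip_head Q u a z) p"
    unfolding p pel_mult_apply vtx_eq_vtx_sum vtx_sum_mult_apply
    by (cases xs) (auto simp: z_Nil z_Cons strip_head_def)
qed

lemma mult_vtx_eq_strip_last_mult_pel:
  fixes Q :: "('v, 'a) quiver" and z :: "('v, 'a) qpath \<Rightarrow> 'k::field"
  assumes z: "z \<in> carrier (path_algebra Q)" "starts_in E z" and w: "tgt Q a \<notin> E"
    and a: "\<forall>b\<in>arrs Q. tgt Q b = tgt Q a \<longrightarrow> b = a"
  shows "z \<otimes>\<^bsub>path_algebra Q\<^esub> vtx (tgt Q a) = strip_last Q a z \<otimes>\<^bsub>path_algebra Q\<^esub> pel (src Q a, [a])"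
proof
  fix p :: "('v, 'a) qpath"
  obtain v xs where p: "p = (v, xs)" by (cases p)
  have z_Nil: "z (tgt Q a, []) = 0"
    using z(2) w by (auto simp: starts_in_def)
  have z_snoc: "b = a \<and> ptgt Q (v, ys) = src Q a" if "z (v, ys @ [b]) \<noteq> 0" "tgt Q b = tgt Q a" for ys b
    using z(1) a that by (force simp: path_algebra_simps mem_qpaths_iff composable_append)
  show "(z \<otimes>\<^bsub>path_algebra Q\<^esub> vtx (tgt Q a)) p = (strip_last Q a z \<otimes>\<^bsub>path_algebra Q\<^esub> pel (src Q a, [a])) p"
    unfolding p mult_pel_apply vtx_eq_vtx_sum mult_vtx_sum_apply
    by (cases xs rule: rev_cases) (auto simp: z_Nil strip_last_def ptgt_append dest: z_snoc)
qed

lemma vtx_mult_eq_pel_mult_strip_prefix: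
  fixes Q :: "('v, 'a) quiver" and z :: "('v, 'a) qpath \<Rightarrow> 'k::field"
  assumes tgt: "\<forall>a\<in>arrs Q. tgt Q a \<in> verts Q"
  shows "forced_exit Q E u as \<Longrightarrow> z \<in> carrier (path_algebra Q) \<Longrightarrow> ends_in Q E z \<Longrightarrow>
    vtx u \<otimes>\<^bsub>path_algebra Q\<^esub> z = pel (u, as) \<otimes>\<^bsub>path_algebra Q\<^esub> strip_prefix Q u as z"
proof (induction as arbitrary: u z)
  case Nil
  then show ?case by (simp add: vtx_def)
next
  case (Cons a as)
  let ?z' = "strip_head Q u a z"
  have z': "?z' \<in> carrier (path_algebra Q)" "ends_in Q E ?z'"
    using strip_head_closed[OF tgt Cons.prems(2)] ends_in_strip_prefix[OF Cons.prems(3), of u "[a]"] by auto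
  have "vtx u \<otimes>\<^bsub>path_algebra Q\<^esub> z = pel (u, [a]) \<otimes>\<^bsub>path_algebra Q\<^esub> ?z'"
    using Cons.prems by (intro vtx_mult_eq_pel_mult_strip_head) auto
  also have "?z' = vtx (tgt Q a) \<otimes>\<^bsub>path_algebra Q\<^esub> ?z'"
    by (rule ext) (simp add: vtx_eq_vtx_sum vtx_sum_mult_apply strip_head_def)
  also have "\<dots> = pel (tgt Q a, as) \<otimes>\<^bsub>path_algebra Q\<^esub> strip_prefix Q (tgt Q a) as ?z'"
    using Cons.IH[OF _ z'] Cons.prems(1) by simp
  finally show ?case
    by (simp add: path_algebra_mult_assoc[symmetric] pel_mult_pel[of Q u "[a]" as, simplified])
qed

lemma mult_vtx_eq_strip_suffix_mult_pel:
  fixes Q :: "('v, 'a) quiver" and z :: "('v, 'a) qpath \<Rightarrow> 'k::field"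
  assumes tgt: "\<forall>a\<in>arrs Q. tgt Q a \<in> verts Q"
  shows "forced_entry Q E w rs \<Longrightarrow> z \<in> carrier (path_algebra Q) \<Longrightarrow> starts_in E z \<Longrightarrow>
    z \<otimes>\<^bsub>path_algebra Q\<^esub> vtx w = strip_suffix Q rs z \<otimes>\<^bsub>path_algebra Q\<^esub> pel (back_src Q w rs, rev rs)"
proof (induction rs arbitrary: w z)
  case Nil
  then show ?case by (simp add: vtx_def)
next
  case (Cons a rs)
  let ?z' = "strip_last Q a z"
  have z': "?z' \<in> carrier (path_algebra Q)" "starts_in E ?z'"
    using strip_last_closed[OF tgt Cons.prems(2)] starts_in_strip_suffix[OF Cons.prems(3), of Q "[a]"] by auto
  have w: "w = tgt Q a"
    using Cons.prems(1) by simp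
  have "z \<otimes>\<^bsub>path_algebra Q\<^esub> vtx w = ?z' \<otimes>\<^bsub>path_algebra Q\<^esub> pel (src Q a, [a])"
    unfolding w using Cons.prems by (intro mult_vtx_eq_strip_last_mult_pel) auto
  also have "?z' = ?z' \<otimes>\<^bsub>path_algebra Q\<^esub> vtx (src Q a)"
    by (rule ext) (simp add: vtx_eq_vtx_sum mult_vtx_sum_apply strip_last_def)
  also have "\<dots> = strip_suffix Q rs ?z' \<otimes>\<^bsub>path_algebra Q\<^esub> pel (back_src Q (src Q a) rs, rev rs)"
    using Cons.IH[OF _ z'] Cons.prems(1) by simp
  finally show ?case
    using ptgt_back_src[of Q E "src Q a" rs] Cons.prems(1)
    by (simp add: path_algebra_mult_assoc pel_mult_pel[of Q "back_src Q (src Q a) rs" "rev rs" "[a]", symmetric])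
qed

section \<open>The stretched quiver\<close>

lemma stretch_quiver_simps:
  "verts (stretch_quiver A Q) = Inl ` verts Q \<union> {Inr (\<alpha>, j) | \<alpha> j. \<alpha> \<in> arrs Q \<and> 1 \<le> j \<and> j \<le> A - 1}"
  "arrs (stretch_quiver A Q) = {(\<alpha>, j) | \<alpha> j. \<alpha> \<in> arrs Q \<and> 1 \<le> j \<and> j \<le> A}"
  "src (stretch_quiver A Q) (\<alpha>, j) = (if j = 1 then Inl (src Q \<alpha>) else Inr (\<alpha>, j - 1))"
  "tgt (stretch_quiver A Q) (\<alpha>, j) = (if j = A then Inl (tgt Q \<alpha>) else Inr (\<alpha>, j))"
  by (simp_all add: stretch_quiver_def)

lemma finite_verts_stretch_quiver:
  assumes "finite (verts Q)" "finite (arrs Q)"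
  shows "finite (verts (stretch_quiver A Q))"
proof -
  have "{Inr (\<alpha>, j) | \<alpha> j. \<alpha> \<in> arrs Q \<and> 1 \<le> j \<and> j \<le> A - 1} \<subseteq> Inr ` (arrs Q \<times> {1..A-1})"
    by auto
  then have "finite {Inr (\<alpha>, j) | \<alpha> j. \<alpha> \<in> arrs Q \<and> 1 \<le> j \<and> j \<le> A - 1}"
    by (rule finite_subset) (use assms in simp)
  then show ?thesis
    using assms by (simp add: stretch_quiver_simps)
qed

lemma tgt_stretch_quiver_in_verts:
  assumes "\<forall>\<alpha>\<in>arrs Q. src Q \<alpha> \<in> verts Q \<and> tgt Q \<alpha> \<in> verts Q"
  shows "\<forall>a\<in>arrs (stretch_quiver A Q). tgt (stretch_quiver A Q) a \<in> verts (stretch_quiver A Q)"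
  using assms by (auto simp: stretch_quiver_simps)

lemma stretch_arrow_path:
  assumes "\<beta> \<in> arrs Q" "1 \<le> j" "j \<le> A"
  shows "composable (stretch_quiver A Q) (src (stretch_quiver A Q) (\<beta>, j)) (map (\<lambda>l. (\<beta>, l)) [j..<A+1])
    \<and> ptgt (stretch_quiver A Q) (src (stretch_quiver A Q) (\<beta>, j), map (\<lambda>l. (\<beta>, l)) [j..<A+1]) = Inl (tgt Q \<beta>)"
  using assms
proof (induction "A - j" arbitrary: j)
  case 0
  then show ?case by (simp add: stretch_quiver_simps)
next
  case (Suc n)
  then have "j < A"
    by linarith
  then have "[j..<A+1] = j # [j+1..<A+1]" "tgt (stretch_quiver A Q) (\<beta>, j) = src (stretch_quiver A Q) (\<beta>, j+1)"
    using Suc.prems by (simp_all add: upt_conv_Cons stretch_quiver_simps)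
  moreover have "composable (stretch_quiver A Q) (src (stretch_quiver A Q) (\<beta>, j+1)) (map (\<lambda>l. (\<beta>, l)) [j+1..<A+1])
    \<and> ptgt (stretch_quiver A Q) (src (stretch_quiver A Q) (\<beta>, j+1), map (\<lambda>l. (\<beta>, l)) [j+1..<A+1]) = Inl (tgt Q \<beta>)"
    using Suc.hyps(1)[of "j+1"] Suc.hyps(2) Suc.prems \<open>j < A\<close> by simp
  ultimately show ?case
    by (simp only: list.map composable.simps ptgt_Cons)
qed

lemma stretch_path_qpaths:
  assumes "A \<ge> 1" "(v, xs) \<in> qpaths Q" and tgt: "\<forall>a\<in>arrs Q. tgt Q a \<in> verts Q"
  shows "stretch_path A (v, xs) \<in> qpaths (stretch_quiver A Q)
    \<and> ptgt (stretch_quiver A Q) (stretch_path A (v, xs)) = Inl (ptgt Q (v, xs))"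
  using assms(2)
proof (induction xs arbitrary: v)
  case Nil
  then show ?case by (auto simp: stretch_path_def mem_qpaths_iff stretch_quiver_simps)
next
  case (Cons b bs)
  have b: "b \<in> arrs Q" "src Q b = v" "(tgt Q b, bs) \<in> qpaths Q" "v \<in> verts Q"
    using Cons.prems tgt by (auto simp: mem_qpaths_iff)
  have "composable (stretch_quiver A Q) (Inl v) (map (\<lambda>l. (b, l)) [1..<A+1])
      \<and> ptgt (stretch_quiver A Q) (Inl v, map (\<lambda>l. (b, l)) [1..<A+1]) = Inl (tgt Q b)"
    using stretch_arrow_path[OF b(1), of 1 A] assms(1) b(2) by (simp add: stretch_quiver_simps)
  moreover have "set (map (\<lambda>l. (b, l)) [1..<A+1]) \<subseteq> arrs (stretch_quiver A Q)"
    using b(1) by (auto simp: stretch_quiver_simps)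
  ultimately show ?case
    using Cons.IH[OF b(3)] b(4)
    by (auto simp: stretch_path_def mem_qpaths_iff composable_append ptgt_append stretch_quiver_simps)
qed

lemma theta_nonzero:
  assumes "theta A g q \<noteq> 0"
  obtains p where "g p \<noteq> 0" "stretch_path A p = q"
proof -
  have "{p. g p \<noteq> 0 \<and> stretch_path A p = q} \<noteq> {}"
  proof
    assume "{p. g p \<noteq> 0 \<and> stretch_path A p = q} = {}"
    then have "theta A g q = 0"
      unfolding theta_def by (simp only: sum.empty)
    with assms show False by simp
  qed
  then show thesis
    using that by blast
qed

lemma theta_props:
  assumes A: "A \<ge> 1" and Q: "\<forall>\<alpha>\<in>arrs Q. src Q \<alpha> \<in> verts Q \<and> tgt Q \<alpha> \<in> verts Q"
    and g: "g \<in> carrier (path_algebra Q)"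
  shows "theta A g \<in> carrier (path_algebra (stretch_quiver A Q))"
    and "starts_in (Inl ` verts Q) (theta A g)"
    and "ends_in (stretch_quiver A Q) (Inl ` verts Q) (theta A g)"
proof -
  have g_supp: "finite {p. g p \<noteq> 0}" "{p. g p \<noteq> 0} \<subseteq> qpaths Q"
    using g by (auto simp: path_algebra_simps)
  have tgt: "\<forall>a\<in>arrs Q. tgt Q a \<in> verts Q"
    using Q by auto
  have supp: "{q. theta A g q \<noteq> 0} \<subseteq> stretch_path A ` {p. g p \<noteq> 0}"
  proof
    fix q assume "q \<in> {q. theta A g q \<noteq> 0}"
    then obtain p where "g p \<noteq> 0" "stretch_path A p = q"
      by (auto elim: theta_nonzero)
    then show "q \<in> stretch_path A ` {p. g p \<noteq> 0}" by blast
  qed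
  have stretched: "q \<in> qpaths (stretch_quiver A Q) \<and> fst q \<in> Inl ` verts Q \<and>
      ptgt (stretch_quiver A Q) q \<in> Inl ` verts Q" if nz: "theta A g q \<noteq> 0" for q
  proof -
    obtain p where "g p \<noteq> 0" "stretch_path A p = q"
      using nz by (rule theta_nonzero)
    moreover obtain v xs where "p = (v, xs)"
      by (cases p)
    ultimately have p: "g (v, xs) \<noteq> 0" "stretch_path A (v, xs) = q"
      by simp_all
    then have vxs: "(v, xs) \<in> qpaths Q"
      using g_supp by auto
    then show ?thesis
      using stretch_path_qpaths[OF A vxs tgt] ptgt_in_verts[OF vxs tgt] p(2)
      by (auto simp: stretch_path_def mem_qpaths_iff)
  qed
  show "theta A g \<in> carrier (path_algebra (stretch_quiver A Q))"
    using supp g_supp stretched by (auto simp: path_algebra_simps intro: finite_subset)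
  show "starts_in (Inl ` verts Q) (theta A g)"
    using stretched by (auto simp: starts_in_def)
  show "ends_in (stretch_quiver A Q) (Inl ` verts Q) (theta A g)"
    using stretched by (auto simp: ends_in_def)
qed

text \<open>For a new vertex \<open>w\<^sub>j\<close> of the arrow \<open>\<alpha>\<close>: \<open>exit_path A w\<^sub>j\<close> is \<open>\<alpha>\<^sub>j\<^sub>+\<^sub>1 \<dots> \<alpha>\<^sub>A\<close> and
  \<open>entry_path w\<^sub>j\<close> is \<open>\<alpha>\<^sub>1 \<dots> \<alpha>\<^sub>j\<close> listed backwards; both are empty at the old vertices.\<close>
definition exit_path :: "nat \<Rightarrow> 'v + 'a \<times> nat \<Rightarrow> ('a \<times> nat) list" where
  "exit_path A u = (case u of Inl _ \<Rightarrow> [] | Inr (\<alpha>, j) \<Rightarrow> map (\<lambda>l. (\<alpha>, l)) [j+1..<A+1])"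

definition entry_path :: "'v + 'a \<times> nat \<Rightarrow> ('a \<times> nat) list" where
  "entry_path u = (case u of Inl _ \<Rightarrow> [] | Inr (\<alpha>, j) \<Rightarrow> map (\<lambda>l. (\<alpha>, l)) (rev [1..<j+1]))"

lemma Inr_notin_image_Inl [simp]: "Inr x \<notin> Inl ` A"
  by auto

lemma forced_exit_stretch_quiver:
  assumes "\<alpha> \<in> arrs Q" "1 \<le> j" "j < A"
  shows "forced_exit (stretch_quiver A Q) (Inl ` verts Q) (Inr (\<alpha>, j)) (map (\<lambda>l. (\<alpha>, l)) [j+1..<A+1])
    \<and> ptgt (stretch_quiver A Q) (Inr (\<alpha>, j), map (\<lambda>l. (\<alpha>, l)) [j+1..<A+1]) = Inl (tgt Q \<alpha>)"
  using assms
proof (induction "A - j" arbitrary: j)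
  case (Suc n)
  have upt: "[j+1..<A+1] = (j+1) # [j+2..<A+1]"
    using Suc.prems by (simp add: upt_conv_Cons)
  have unique: "\<forall>b\<in>arrs (stretch_quiver A Q). src (stretch_quiver A Q) b = Inr (\<alpha>, j) \<longrightarrow> b = (\<alpha>, j+1)"
    by (auto simp: stretch_quiver_simps split: if_splits)
  show ?case
  proof (cases "j + 1 = A")
    case True
    then show ?thesis
      unfolding upt using Suc.prems unique by (simp add: stretch_quiver_simps)
  next
    case False
    then have "forced_exit (stretch_quiver A Q) (Inl ` verts Q) (Inr (\<alpha>, j+1)) (map (\<lambda>l. (\<alpha>, l)) [j+2..<A+1])
      \<and> ptgt (stretch_quiver A Q) (Inr (\<alpha>, j+1), map (\<lambda>l. (\<alpha>, l)) [j+2..<A+1]) = Inl (tgt Q \<alpha>)"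
      using Suc.hyps(1)[of "j+1"] Suc.hyps(2) Suc.prems by (simp add: numeral_2_eq_2)
    then show ?thesis
      unfolding upt using Suc.prems unique False by (simp add: stretch_quiver_simps)
  qed
qed simp

lemma forced_entry_stretch_quiver:
  assumes "\<alpha> \<in> arrs Q" "1 \<le> j" "j < A"
  shows "forced_entry (stretch_quiver A Q) (Inl ` verts Q) (Inr (\<alpha>, j)) (map (\<lambda>l. (\<alpha>, l)) (rev [1..<j+1]))
    \<and> back_src (stretch_quiver A Q) (Inr (\<alpha>, j)) (map (\<lambda>l. (\<alpha>, l)) (rev [1..<j+1])) = Inl (src Q \<alpha>)"
  using assms
proof (induction j)
  case (Suc i)
  have unique: "\<forall>b\<in>arrs (stretch_quiver A Q). tgt (stretch_quiver A Q) b = Inr (\<alpha>, Suc i) \<longrightarrow> b = (\<alpha>, Suc i)"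
    by (auto simp: stretch_quiver_simps split: if_splits)
  show ?case
  proof (cases "i = 0")
    case True
    then show ?thesis
      using Suc.prems unique by (simp add: stretch_quiver_simps)
  next
    case False
    then have "1 \<le> i" "i < A"
      using Suc.prems by auto
    note IH = Suc.IH[OF Suc.prems(1) this]
    have "src (stretch_quiver A Q) (\<alpha>, Suc i) = Inr (\<alpha>, i)"
      "(\<alpha>, Suc i) \<in> arrs (stretch_quiver A Q)" "tgt (stretch_quiver A Q) (\<alpha>, Suc i) = Inr (\<alpha>, Suc i)"
      using False Suc.prems by (auto simp: stretch_quiver_simps)
    moreover have "rev [1..<Suc i + 1] = Suc i # rev [1..<i + 1]"
      by simp
    ultimately show ?thesis
      using IH unique by (simp del: upt_Suc)
  qed
qed simp

context
  fixes Q :: "('v, 'a) quiver" and A :: nat and u :: "'v + 'a \<times> nat"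
  assumes u: "u \<in> verts (stretch_quiver A Q)"
    and Q: "\<forall>\<alpha>\<in>arrs Q. src Q \<alpha> \<in> verts Q \<and> tgt Q \<alpha> \<in> verts Q"
begin

lemma exit_path_props:
  "forced_exit (stretch_quiver A Q) (Inl ` verts Q) u (exit_path A u)"
  "ptgt (stretch_quiver A Q) (u, exit_path A u) \<in> Inl ` verts Q"
proof -
  consider (old) v where "u = Inl v" "v \<in> verts Q"
    | (new) \<alpha> j where "u = Inr (\<alpha>, j)" "\<alpha> \<in> arrs Q" "1 \<le> j" "j < A"
    using u by (auto simp: stretch_quiver_simps)
  then have "forced_exit (stretch_quiver A Q) (Inl ` verts Q) u (exit_path A u) \<and>
      ptgt (stretch_quiver A Q) (u, exit_path A u) \<in> Inl ` verts Q"
  proof cases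
    case new
    then show ?thesis
      using forced_exit_stretch_quiver[OF new(2-4)] Q by (auto simp: exit_path_def)
  qed (simp add: exit_path_def)
  then show "forced_exit (stretch_quiver A Q) (Inl ` verts Q) u (exit_path A u)"
    "ptgt (stretch_quiver A Q) (u, exit_path A u) \<in> Inl ` verts Q"
    by auto
qed

lemma entry_path_props:
  "forced_entry (stretch_quiver A Q) (Inl ` verts Q) u (entry_path u)"
  "back_src (stretch_quiver A Q) u (entry_path u) \<in> Inl ` verts Q"
proof -
  consider (old) v where "u = Inl v" "v \<in> verts Q"
    | (new) \<alpha> j where "u = Inr (\<alpha>, j)" "\<alpha> \<in> arrs Q" "1 \<le> j" "j < A"
    using u by (auto simp: stretch_quiver_simps)
  then have "forced_entry (stretch_quiver A Q) (Inl ` verts Q) u (entry_path u) \<and>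
      back_src (stretch_quiver A Q) u (entry_path u) \<in> Inl ` verts Q"
  proof cases
    case new
    then show ?thesis
      using forced_entry_stretch_quiver[OF new(2-4)] Q by (auto simp: entry_path_def)
  qed (simp add: entry_path_def)
  then show "forced_entry (stretch_quiver A Q) (Inl ` verts Q) u (entry_path u)"
    "back_src (stretch_quiver A Q) u (entry_path u) \<in> Inl ` verts Q"
    by auto
qed

end

section \<open>Projectivity of the corner modules\<close>

locale stretched_setting =
  fixes Q :: "('v, 'a) quiver" and A :: nat and G :: "(('v, 'a) qpath \<Rightarrow> 'k::field) set"
  assumes finite_verts: "finite (verts Q)" and finite_arrs: "finite (arrs Q)"
    and src_tgt: "\<forall>\<alpha>\<in>arrs Q. src Q \<alpha> \<in> verts Q \<and> tgt Q \<alpha> \<in> verts Q"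
    and G_carrier: "G \<subseteq> carrier (path_algebra Q)" and A_pos: "A \<ge> 1"
begin

abbreviation "Qt \<equiv> stretch_quiver A Q"
abbreviation "R \<equiv> (path_algebra Qt :: (('v + 'a \<times> nat, 'a \<times> nat) qpath \<Rightarrow> 'k) ring)"
abbreviation "E \<equiv> Inl ` verts Q"
abbreviation "K \<equiv> stretched_ideal A Q G"
abbreviation "L \<equiv> stretched_algebra A Q G"
abbreviation "\<pi> \<equiv> \<lambda>x. K +>\<^bsub>R\<^esub> x"
abbreviation "\<epsilon> \<equiv> stretched_eps A Q G"
abbreviation "e \<equiv> vtx_sum E :: ('v + 'a \<times> nat, 'a \<times> nat) qpath \<Rightarrow> 'k"
abbreviation "B \<equiv> corner_ring L \<epsilon>"

lemma tgt_Qt: "\<forall>a\<in>arrs Qt. tgt Qt a \<in> verts Qt"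
  by (rule tgt_stretch_quiver_in_verts[OF src_tgt])

lemma finite_verts_Qt: "finite (verts Qt)"
  by (rule finite_verts_stretch_quiver[OF finite_verts finite_arrs])

sublocale R: ring R
  by (rule ring_path_algebra[OF finite_verts_Qt tgt_Qt])

lemma theta_G_carrier: "theta A ` G \<subseteq> carrier R"
  using theta_props(1)[OF A_pos src_tgt] G_carrier by auto

sublocale K: ideal K R
  unfolding stretched_ideal_def by (rule R.genideal_ideal[OF theta_G_carrier])

sublocale L: ring L
  unfolding stretched_algebra_def by (rule K.quotient_is_ring)

lemma \<pi>_hom: "\<pi> \<in> ring_hom R L"
  unfolding stretched_algebra_def by (rule K.rcos_ring_hom)

lemma \<pi>_closed: "x \<in> carrier R \<Longrightarrow> \<pi> x \<in> carrier L"
  by (rule ring_hom_closed[OF \<pi>_hom])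

lemma \<pi>_mult: "x \<in> carrier R \<Longrightarrow> y \<in> carrier R \<Longrightarrow> \<pi> (x \<otimes>\<^bsub>R\<^esub> y) = \<pi> x \<otimes>\<^bsub>L\<^esub> \<pi> y"
  by (rule ring_hom_mult[OF \<pi>_hom])

lemma \<pi>_add: "x \<in> carrier R \<Longrightarrow> y \<in> carrier R \<Longrightarrow> \<pi> (x \<oplus>\<^bsub>R\<^esub> y) = \<pi> x \<oplus>\<^bsub>L\<^esub> \<pi> y"
  by (rule ring_hom_add[OF \<pi>_hom])

lemma \<pi>_finsum:
  "finite I \<Longrightarrow> F \<in> I \<rightarrow> carrier R \<Longrightarrow> \<pi> (\<Oplus>\<^bsub>R\<^esub>i\<in>I. F i) = (\<Oplus>\<^bsub>L\<^esub>i\<in>I. \<pi> (F i))"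
  by (rule additive_hom_finsum[OF R.is_abelian_group L.is_abelian_group]) (auto simp: \<pi>_closed \<pi>_add)

lemma \<pi>_surj: "X \<in> carrier L \<Longrightarrow> \<exists>x\<in>carrier R. X = \<pi> x"
  by (auto simp: stretched_algebra_def FactRing_def A_RCOSETS_def')

lemma vtx_closed: "u \<in> verts Qt \<Longrightarrow> vtx u \<in> carrier R"
  unfolding vtx_def by (rule pel_closed) (simp add: mem_qpaths_iff)

lemma finsum_vtx_eq_vtx_sum: "finite U \<Longrightarrow> U \<subseteq> verts Qt \<Longrightarrow> (\<Oplus>\<^bsub>R\<^esub>u\<in>U. vtx u) = vtx_sum U"
proof (induction U rule: finite_induct)
  case (insert u U)
  have "vtx u \<oplus>\<^bsub>R\<^esub> vtx_sum U = vtx_sum (insert u U)"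
    using insert.hyps(2) by (auto simp: path_algebra_simps vtx_eq_vtx_sum vtx_sum_def)
  moreover have "vtx \<in> U \<rightarrow> carrier R" "vtx u \<in> carrier R"
    using insert.prems vtx_closed by auto
  ultimately show ?case
    using insert by (simp add: R.finsum_insert)
qed (auto simp: path_algebra_simps vtx_sum_def)

lemma E_subset: "E \<subseteq> verts Qt"
  by (auto simp: stretch_quiver_simps)

lemma e_eq_finsum: "e = (\<Oplus>\<^bsub>R\<^esub>u\<in>E. vtx u)"
  using finsum_vtx_eq_vtx_sum[OF finite_imageI[OF finite_verts] E_subset] by simp

lemma e_closed: "e \<in> carrier R"
  unfolding e_eq_finsum using E_subset vtx_closed by (intro R.finsum_closed) auto

lemma eps_eq: "\<epsilon> = \<pi> e"
proof -
  have "(\<Oplus>\<^bsub>R\<^esub>v\<in>verts Q. vtx (Inl v)) = (\<Oplus>\<^bsub>R\<^esub>u\<in>E. vtx u)"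
    by (rule R.finsum_reindex[symmetric]) (auto simp: vtx_closed stretch_quiver_simps inj_on_def)
  then show ?thesis
    by (simp add: stretched_eps_def stretched_ideal_def e_eq_finsum)
qed

lemma one_eq_finsum_vtx: "\<one>\<^bsub>R\<^esub> = (\<Oplus>\<^bsub>R\<^esub>u\<in>verts Qt. vtx u)"
  by (simp add: finsum_vtx_eq_vtx_sum finite_verts_Qt one_path_algebra_eq)

lemma eps_closed: "\<epsilon> \<in> carrier L"
  by (simp add: eps_eq \<pi>_closed e_closed)

lemma eps_idem: "\<epsilon> \<otimes>\<^bsub>L\<^esub> \<epsilon> = \<epsilon>"
  by (simp add: eps_eq \<pi>_mult[OF e_closed e_closed, symmetric] vtx_sum_idem)

lemma \<pi>_in_corner:
  assumes "f \<in> carrier R" "starts_in E f" "ends_in Qt E f"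
  shows "\<pi> f \<in> carrier B"
proof -
  have "\<epsilon> \<otimes>\<^bsub>L\<^esub> \<pi> f = \<pi> f" "\<pi> f \<otimes>\<^bsub>L\<^esub> \<epsilon> = \<pi> f"
    using assms \<pi>_mult[OF e_closed assms(1)] \<pi>_mult[OF assms(1) e_closed]
    by (simp_all add: eps_eq vtx_sum_mult_eq_if_starts_in mult_vtx_sum_eq_if_ends_in)
  then show ?thesis
    by (simp add: L.corner_ring_carrier_iff[OF eps_closed eps_idem] \<pi>_closed assms(1))
qed

lemma theta_G_starts_ends: "g \<in> theta A ` G \<Longrightarrow> starts_in E g \<and> ends_in Qt E g"
  using theta_props(2,3)[OF A_pos src_tgt] G_carrier by auto

definition exit_coeff :: "'v + 'a \<times> nat \<Rightarrow> (('v + 'a \<times> nat, 'a \<times> nat) qpath \<Rightarrow> 'k) \<Rightarrow> _" where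
  "exit_coeff u y = strip_prefix Qt u (exit_path A u) (vtx u \<otimes>\<^bsub>R\<^esub> y)"

context
  fixes u assumes u: "u \<in> verts Qt"
begin

lemma exit_coeff_closed: "y \<in> carrier R \<Longrightarrow> exit_coeff u y \<in> carrier R"
  unfolding exit_coeff_def by (intro strip_prefix_closed[OF tgt_Qt] R.m_closed vtx_closed u)

lemma exit_coeff_add:
  "x \<in> carrier R \<Longrightarrow> y \<in> carrier R \<Longrightarrow> exit_coeff u (x \<oplus>\<^bsub>R\<^esub> y) = exit_coeff u x \<oplus>\<^bsub>R\<^esub> exit_coeff u y"
  unfolding exit_coeff_def by (simp add: R.r_distr vtx_closed u strip_prefix_add)

lemma exit_coeff_ideal: "y \<in> K \<Longrightarrow> exit_coeff u y \<in> K"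
  unfolding exit_coeff_def stretched_ideal_def
  using theta_G_starts_ends exit_path_props(1)[OF u src_tgt]
  by (intro strip_prefix_genideal[OF R.ring_axioms tgt_Qt theta_G_carrier])
    (auto intro: K.I_l_closed[unfolded stretched_ideal_def] vtx_closed u)

lemma exit_coeff_corner:
  assumes "ends_in Qt E y"
  shows "starts_in E (exit_coeff u y)" "ends_in Qt E (exit_coeff u y)"
proof -
  have uy: "ends_in Qt E (vtx u \<otimes>\<^bsub>R\<^esub> y)"
    unfolding vtx_eq_vtx_sum by (rule ends_in_vtx_sum_mult[OF assms])
  then show "ends_in Qt E (exit_coeff u y)"
    unfolding exit_coeff_def by (rule ends_in_strip_prefix)
  show "starts_in E (exit_coeff u y)"
  proof (cases "exit_path A u")
    case Nil
    then have "u \<in> E"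
      using exit_path_props(2)[OF u src_tgt] by simp
    moreover have "starts_in {u} (vtx u \<otimes>\<^bsub>R\<^esub> y)"
      unfolding vtx_eq_vtx_sum by (rule starts_in_vtx_sum_mult)
    ultimately show ?thesis
      unfolding exit_coeff_def using Nil by (auto simp: starts_in_def)
  next
    case (Cons a as)
    then show ?thesis
      using exit_path_props(2)[OF u src_tgt] starts_in_strip_prefix_Cons[of Qt u a as]
      unfolding exit_coeff_def by (auto simp: starts_in_def)
  qed
qed

lemma vtx_mult_eq_exit_path_mult_exit_coeff:
  assumes "y \<in> carrier R" "ends_in Qt E y"
  shows "vtx u \<otimes>\<^bsub>R\<^esub> y = pel (u, exit_path A u) \<otimes>\<^bsub>R\<^esub> exit_coeff u y"
proof -
  have "vtx u \<otimes>\<^bsub>R\<^esub> (vtx u \<otimes>\<^bsub>R\<^esub> y) = pel (u, exit_path A u) \<otimes>\<^bsub>R\<^esub> exit_coeff u y"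
    unfolding exit_coeff_def
    by (rule vtx_mult_eq_pel_mult_strip_prefix[OF tgt_Qt exit_path_props(1)[OF u src_tgt]])
      (use assms vtx_closed[OF u] in \<open>auto simp: vtx_eq_vtx_sum intro: ends_in_vtx_sum_mult\<close>)
  then show ?thesis
    by (simp add: path_algebra_mult_assoc[symmetric] vtx_eq_vtx_sum vtx_sum_idem)
qed

lemma exit_coeff_mult:
  assumes "ends_in Qt E y"
  shows "exit_coeff u (y \<otimes>\<^bsub>R\<^esub> t) = exit_coeff u y \<otimes>\<^bsub>R\<^esub> t"
  unfolding exit_coeff_def path_algebra_mult_assoc[symmetric]
  using assms unfolding vtx_eq_vtx_sum
  by (intro strip_prefix_mult[OF exit_path_props(1)[OF u src_tgt]] ends_in_vtx_sum_mult)

lemma exit_path_closed: "pel (u, exit_path A u) \<in> carrier R"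
  using forced_exit_qpath[OF exit_path_props(1)[OF u src_tgt] u] by (rule pel_closed)

lemma exit_path_ends_in: "ends_in Qt E (pel (u, exit_path A u) :: _ \<Rightarrow> 'k)"
  using exit_path_props(2)[OF u src_tgt] by (auto simp: ends_in_def pel_def)

end

abbreviation "P\<^sub>R \<equiv> right_corner_module L \<epsilon>"

lemmas P\<^sub>R_iff = L.right_corner_module_carrier_iff[OF eps_closed eps_idem]
lemmas B_iff = L.corner_ring_carrier_iff[OF eps_closed eps_idem]

lemma right_rep_exists:
  assumes "Y \<in> carrier P\<^sub>R"
  shows "\<exists>y. y \<in> carrier R \<and> ends_in Qt E y \<and> Y = \<pi> y"
proof -
  have Y: "Y \<in> carrier L" "Y \<otimes>\<^bsub>L\<^esub> \<epsilon> = Y"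
    using assms P\<^sub>R_iff by auto
  obtain y where y: "y \<in> carrier R" "Y = \<pi> y"
    using \<pi>_surj[OF Y(1)] by blast
  then have "Y = \<pi> (y \<otimes>\<^bsub>R\<^esub> e)"
    using Y(2) \<pi>_mult[OF y(1) e_closed] by (simp add: eps_eq)
  then show ?thesis
    using y(1) e_closed by (intro exI[of _ "y \<otimes>\<^bsub>R\<^esub> e"]) (simp add: ends_in_mult_vtx_sum)
qed

definition right_rep :: "_ set \<Rightarrow> ('v + 'a \<times> nat, 'a \<times> nat) qpath \<Rightarrow> 'k" where
  "right_rep Y = (SOME y. y \<in> carrier R \<and> ends_in Qt E y \<and> Y = \<pi> y)"

lemma right_rep:
  assumes "Y \<in> carrier P\<^sub>R"
  shows "right_rep Y \<in> carrier R" "ends_in Qt E (right_rep Y)" "\<pi> (right_rep Y) = Y"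
proof -
  have "right_rep Y \<in> carrier R \<and> ends_in Qt E (right_rep Y) \<and> Y = \<pi> (right_rep Y)"
    unfolding right_rep_def using right_rep_exists[OF assms] by (rule someI_ex)
  then show "right_rep Y \<in> carrier R" "ends_in Qt E (right_rep Y)" "\<pi> (right_rep Y) = Y"
    by simp_all
qed

definition right_coord :: "'v + 'a \<times> nat \<Rightarrow> _ set \<Rightarrow> _ set" where
  "right_coord u Y = \<pi> (exit_coeff u (right_rep Y))"

lemma right_coord_eq:
  assumes u: "u \<in> verts Qt" and Y: "Y \<in> carrier P\<^sub>R" and y: "y \<in> carrier R" "\<pi> y = Y"
  shows "right_coord u Y = \<pi> (exit_coeff u y)"
  unfolding right_coord_def
proof (rule K.rcos_eq_additive_map[where F = "exit_coeff u"])
  show "\<pi> (right_rep Y) = \<pi> y"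
    using right_rep(3)[OF Y] y(2) by simp
qed (use right_rep(1)[OF Y] y(1) in \<open>auto simp: exit_coeff_closed[OF u] exit_coeff_add[OF u] exit_coeff_ideal[OF u]\<close>)

context
  fixes u assumes u: "u \<in> verts Qt"
begin

lemma right_coord_closed: "Y \<in> carrier P\<^sub>R \<Longrightarrow> right_coord u Y \<in> carrier B"
  unfolding right_coord_def using right_rep
  by (intro \<pi>_in_corner) (auto simp: exit_coeff_closed[OF u] exit_coeff_corner[OF u])

lemma right_coord_add:
  assumes Y: "Y \<in> carrier P\<^sub>R" and Z: "Z \<in> carrier P\<^sub>R"
  shows "right_coord u (Y \<oplus>\<^bsub>L\<^esub> Z) = right_coord u Y \<oplus>\<^bsub>L\<^esub> right_coord u Z"
proof -
  note y = right_rep[OF Y] and z = right_rep[OF Z]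
  have "Y \<oplus>\<^bsub>L\<^esub> Z \<in> carrier P\<^sub>R" "\<pi> (right_rep Y \<oplus>\<^bsub>R\<^esub> right_rep Z) = Y \<oplus>\<^bsub>L\<^esub> Z"
    using Y Z y z by (simp_all add: P\<^sub>R_iff L.l_distr eps_closed \<pi>_add)
  then have "right_coord u (Y \<oplus>\<^bsub>L\<^esub> Z) = \<pi> (exit_coeff u (right_rep Y \<oplus>\<^bsub>R\<^esub> right_rep Z))"
    using y z by (intro right_coord_eq[OF u]) simp_all
  then show ?thesis
    using y z by (simp add: right_coord_def exit_coeff_add[OF u] exit_coeff_closed[OF u] \<pi>_add)
qed

lemma right_coord_mult:
  assumes Y: "Y \<in> carrier P\<^sub>R" and b: "b \<in> carrier B"
  shows "right_coord u (Y \<otimes>\<^bsub>L\<^esub> b) = right_coord u Y \<otimes>\<^bsub>L\<^esub> b"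
proof -
  note y = right_rep[OF Y]
  obtain t where t: "t \<in> carrier R" "\<pi> t = b"
    using \<pi>_surj b B_iff by metis
  have "Y \<otimes>\<^bsub>L\<^esub> b \<in> carrier P\<^sub>R" "\<pi> (right_rep Y \<otimes>\<^bsub>R\<^esub> t) = Y \<otimes>\<^bsub>L\<^esub> b"
    using Y b y t B_iff by (simp_all add: P\<^sub>R_iff L.m_assoc eps_closed \<pi>_mult)
  then have "right_coord u (Y \<otimes>\<^bsub>L\<^esub> b) = \<pi> (exit_coeff u (right_rep Y \<otimes>\<^bsub>R\<^esub> t))"
    using y t by (intro right_coord_eq[OF u]) simp_all
  then show ?thesis
    using y t by (simp add: right_coord_def exit_coeff_mult[OF u] exit_coeff_closed[OF u] \<pi>_mult)
qed

lemma exit_path_in_right_module: "\<pi> (pel (u, exit_path A u)) \<in> carrier P\<^sub>R"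
proof -
  have "\<pi> (pel (u, exit_path A u)) \<otimes>\<^bsub>L\<^esub> \<epsilon> = \<pi> (pel (u, exit_path A u))"
    using \<pi>_mult[OF exit_path_closed[OF u] e_closed] mult_vtx_sum_eq_if_ends_in[OF exit_path_ends_in[OF u]]
    by (simp add: eps_eq)
  then show ?thesis
    by (simp add: P\<^sub>R_iff \<pi>_closed exit_path_closed[OF u])
qed

end

lemma right_decomposition:
  assumes Y: "Y \<in> carrier P\<^sub>R"
  shows "Y = (\<Oplus>\<^bsub>L\<^esub>u\<in>verts Qt. \<pi> (pel (u, exit_path A u)) \<otimes>\<^bsub>L\<^esub> right_coord u Y)"
proof -
  define y where "y = right_rep Y"
  have y: "y \<in> carrier R" "ends_in Qt E y" "\<pi> y = Y"
    using right_rep[OF Y] by (simp_all add: y_def)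
  have "(\<Oplus>\<^bsub>L\<^esub>u\<in>verts Qt. \<pi> (pel (u, exit_path A u)) \<otimes>\<^bsub>L\<^esub> right_coord u Y) =
      (\<Oplus>\<^bsub>L\<^esub>u\<in>verts Qt. \<pi> (vtx u \<otimes>\<^bsub>R\<^esub> y))"
  proof (rule L.finsum_cong'[OF refl])
    fix u assume u: "u \<in> verts Qt"
    show "\<pi> (pel (u, exit_path A u)) \<otimes>\<^bsub>L\<^esub> right_coord u Y = \<pi> (vtx u \<otimes>\<^bsub>R\<^esub> y)"
      using y by (simp add: right_coord_def y_def[symmetric] vtx_mult_eq_exit_path_mult_exit_coeff[OF u]
          \<pi>_mult exit_path_closed[OF u] exit_coeff_closed[OF u])
  qed (use y(1) vtx_closed in \<open>auto intro: \<pi>_closed\<close>)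
  also have "\<dots> = \<pi> (\<Oplus>\<^bsub>R\<^esub>u\<in>verts Qt. vtx u \<otimes>\<^bsub>R\<^esub> y)"
    using y(1) vtx_closed by (intro \<pi>_finsum[symmetric] finite_verts_Qt) auto
  also have "(\<Oplus>\<^bsub>R\<^esub>u\<in>verts Qt. vtx u \<otimes>\<^bsub>R\<^esub> y) = y"
    using R.finsum_ldistr[OF finite_verts_Qt y(1), of vtx] vtx_closed y(1)
    by (simp add: one_eq_finsum_vtx[symmetric])
  finally show ?thesis
    using y(3) by simp
qed

theorem right_projective_corner: "right_projective B P\<^sub>R TYPE('m) TYPE('n)"
  by (rule L.right_projective_right_corner_module_if_dual_basis[OF eps_closed eps_idem finite_verts_Qt,
        where x = "\<lambda>u. \<pi> (pel (u, exit_path A u))" and \<phi> = right_coord])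
    (simp_all add: exit_path_in_right_module right_coord_closed right_coord_add right_coord_mult
      right_decomposition[symmetric])

definition entry_coeff :: "'v + 'a \<times> nat \<Rightarrow> (('v + 'a \<times> nat, 'a \<times> nat) qpath \<Rightarrow> 'k) \<Rightarrow> _" where
  "entry_coeff u y = strip_suffix Qt (entry_path u) (y \<otimes>\<^bsub>R\<^esub> vtx u)"

abbreviation entry_qpath :: "'v + 'a \<times> nat \<Rightarrow> ('v + 'a \<times> nat, 'a \<times> nat) qpath" where
  "entry_qpath u \<equiv> (back_src Qt u (entry_path u), rev (entry_path u))"

context
  fixes u assumes u: "u \<in> verts Qt"
begin

lemma entry_coeff_closed: "y \<in> carrier R \<Longrightarrow> entry_coeff u y \<in> carrier R"
  unfolding entry_coeff_def by (intro strip_suffix_closed[OF tgt_Qt] R.m_closed vtx_closed u)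

lemma entry_coeff_add:
  "x \<in> carrier R \<Longrightarrow> y \<in> carrier R \<Longrightarrow> entry_coeff u (x \<oplus>\<^bsub>R\<^esub> y) = entry_coeff u x \<oplus>\<^bsub>R\<^esub> entry_coeff u y"
  unfolding entry_coeff_def by (simp add: R.l_distr vtx_closed u strip_suffix_add)

lemma entry_coeff_ideal: "y \<in> K \<Longrightarrow> entry_coeff u y \<in> K"
  unfolding entry_coeff_def stretched_ideal_def
  using theta_G_starts_ends entry_path_props(1)[OF u src_tgt]
  by (intro strip_suffix_genideal[OF R.ring_axioms tgt_Qt theta_G_carrier])
    (auto intro: K.I_r_closed[unfolded stretched_ideal_def] vtx_closed u)

lemma entry_coeff_corner:
  assumes "starts_in E y"
  shows "starts_in E (entry_coeff u y)" "ends_in Qt E (entry_coeff u y)"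
proof -
  have yu: "starts_in E (y \<otimes>\<^bsub>R\<^esub> vtx u)"
    unfolding vtx_eq_vtx_sum by (rule starts_in_mult_vtx_sum[OF assms])
  then show "starts_in E (entry_coeff u y)"
    unfolding entry_coeff_def by (rule starts_in_strip_suffix)
  show "ends_in Qt E (entry_coeff u y)"
  proof (cases "entry_path u")
    case Nil
    then have "u \<in> E"
      using entry_path_props(2)[OF u src_tgt] by simp
    moreover have "ends_in Qt {u} (y \<otimes>\<^bsub>R\<^esub> vtx u)"
      unfolding vtx_eq_vtx_sum by (rule ends_in_mult_vtx_sum)
    ultimately show ?thesis
      unfolding entry_coeff_def using Nil by (auto simp: ends_in_def)
  next
    case (Cons a rs)
    then show ?thesis
      using entry_path_props(2)[OF u src_tgt] ends_in_strip_suffix_Cons[of Qt a rs "y \<otimes>\<^bsub>R\<^esub> vtx u"]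
      unfolding entry_coeff_def by (auto simp: ends_in_def)
  qed
qed

lemma mult_vtx_eq_entry_coeff_mult_entry_path:
  assumes "y \<in> carrier R" "starts_in E y"
  shows "y \<otimes>\<^bsub>R\<^esub> vtx u = entry_coeff u y \<otimes>\<^bsub>R\<^esub> pel (entry_qpath u)"
proof -
  have "(y \<otimes>\<^bsub>R\<^esub> vtx u) \<otimes>\<^bsub>R\<^esub> vtx u = entry_coeff u y \<otimes>\<^bsub>R\<^esub> pel (entry_qpath u)"
    unfolding entry_coeff_def
    by (rule mult_vtx_eq_strip_suffix_mult_pel[OF tgt_Qt entry_path_props(1)[OF u src_tgt]])
      (use assms vtx_closed[OF u] in \<open>auto simp: vtx_eq_vtx_sum intro: starts_in_mult_vtx_sum\<close>)
  then show ?thesis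
    by (simp add: path_algebra_mult_assoc vtx_eq_vtx_sum vtx_sum_idem)
qed

lemma entry_coeff_mult:
  assumes "starts_in E y"
  shows "entry_coeff u (t \<otimes>\<^bsub>R\<^esub> y) = t \<otimes>\<^bsub>R\<^esub> entry_coeff u y"
  unfolding entry_coeff_def path_algebra_mult_assoc
  using assms unfolding vtx_eq_vtx_sum
  by (intro strip_suffix_mult[OF entry_path_props(1)[OF u src_tgt]] starts_in_mult_vtx_sum)

lemma entry_path_closed: "pel (entry_qpath u) \<in> carrier R"
  using entry_path_props(2)[OF u src_tgt] E_subset
  by (intro pel_closed forced_entry_qpath[OF entry_path_props(1)[OF u src_tgt]]) auto

lemma entry_path_starts_in: "starts_in E (pel (entry_qpath u) :: _ \<Rightarrow> 'k)"
  using entry_path_props(2)[OF u src_tgt] by (auto simp: starts_in_def pel_def)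

end

abbreviation "P\<^sub>L \<equiv> left_corner_module L \<epsilon>"

lemmas P\<^sub>L_iff = L.left_corner_module_carrier_iff[OF eps_closed eps_idem]

lemma left_rep_exists:
  assumes "Y \<in> carrier P\<^sub>L"
  shows "\<exists>y. y \<in> carrier R \<and> starts_in E y \<and> Y = \<pi> y"
proof -
  have Y: "Y \<in> carrier L" "\<epsilon> \<otimes>\<^bsub>L\<^esub> Y = Y"
    using assms P\<^sub>L_iff by auto
  obtain y where y: "y \<in> carrier R" "Y = \<pi> y"
    using \<pi>_surj[OF Y(1)] by blast
  then have "Y = \<pi> (e \<otimes>\<^bsub>R\<^esub> y)"
    using Y(2) \<pi>_mult[OF e_closed y(1)] by (simp add: eps_eq)
  then show ?thesis
    using y(1) e_closed by (intro exI[of _ "e \<otimes>\<^bsub>R\<^esub> y"]) (simp add: starts_in_vtx_sum_mult)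
qed

definition left_rep :: "_ set \<Rightarrow> ('v + 'a \<times> nat, 'a \<times> nat) qpath \<Rightarrow> 'k" where
  "left_rep Y = (SOME y. y \<in> carrier R \<and> starts_in E y \<and> Y = \<pi> y)"

lemma left_rep:
  assumes "Y \<in> carrier P\<^sub>L"
  shows "left_rep Y \<in> carrier R" "starts_in E (left_rep Y)" "\<pi> (left_rep Y) = Y"
proof -
  have "left_rep Y \<in> carrier R \<and> starts_in E (left_rep Y) \<and> Y = \<pi> (left_rep Y)"
    unfolding left_rep_def using left_rep_exists[OF assms] by (rule someI_ex)
  then show "left_rep Y \<in> carrier R" "starts_in E (left_rep Y)" "\<pi> (left_rep Y) = Y"
    by simp_all
qed

definition left_coord :: "'v + 'a \<times> nat \<Rightarrow> _ set \<Rightarrow> _ set" where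
  "left_coord u Y = \<pi> (entry_coeff u (left_rep Y))"

lemma left_coord_eq:
  assumes u: "u \<in> verts Qt" and Y: "Y \<in> carrier P\<^sub>L" and y: "y \<in> carrier R" "\<pi> y = Y"
  shows "left_coord u Y = \<pi> (entry_coeff u y)"
  unfolding left_coord_def
proof (rule K.rcos_eq_additive_map[where F = "entry_coeff u"])
  show "\<pi> (left_rep Y) = \<pi> y"
    using left_rep(3)[OF Y] y(2) by simp
qed (use left_rep(1)[OF Y] y(1) in \<open>auto simp: entry_coeff_closed[OF u] entry_coeff_add[OF u] entry_coeff_ideal[OF u]\<close>)

context
  fixes u assumes u: "u \<in> verts Qt"
begin

lemma left_coord_closed: "Y \<in> carrier P\<^sub>L \<Longrightarrow> left_coord u Y \<in> carrier B"
  unfolding left_coord_def using left_rep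
  by (intro \<pi>_in_corner) (auto simp: entry_coeff_closed[OF u] entry_coeff_corner[OF u])

lemma left_coord_add:
  assumes Y: "Y \<in> carrier P\<^sub>L" and Z: "Z \<in> carrier P\<^sub>L"
  shows "left_coord u (Y \<oplus>\<^bsub>L\<^esub> Z) = left_coord u Y \<oplus>\<^bsub>L\<^esub> left_coord u Z"
proof -
  note y = left_rep[OF Y] and z = left_rep[OF Z]
  have "Y \<oplus>\<^bsub>L\<^esub> Z \<in> carrier P\<^sub>L" "\<pi> (left_rep Y \<oplus>\<^bsub>R\<^esub> left_rep Z) = Y \<oplus>\<^bsub>L\<^esub> Z"
    using Y Z y z by (simp_all add: P\<^sub>L_iff L.r_distr eps_closed \<pi>_add)
  then have "left_coord u (Y \<oplus>\<^bsub>L\<^esub> Z) = \<pi> (entry_coeff u (left_rep Y \<oplus>\<^bsub>R\<^esub> left_rep Z))"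
    using y z by (intro left_coord_eq[OF u]) simp_all
  then show ?thesis
    using y z by (simp add: left_coord_def entry_coeff_add[OF u] entry_coeff_closed[OF u] \<pi>_add)
qed

lemma left_coord_mult:
  assumes Y: "Y \<in> carrier P\<^sub>L" and b: "b \<in> carrier B"
  shows "left_coord u (b \<otimes>\<^bsub>L\<^esub> Y) = b \<otimes>\<^bsub>L\<^esub> left_coord u Y"
proof -
  note y = left_rep[OF Y]
  obtain t where t: "t \<in> carrier R" "\<pi> t = b"
    using \<pi>_surj b B_iff by metis
  have "b \<otimes>\<^bsub>L\<^esub> Y \<in> carrier P\<^sub>L" "\<pi> (t \<otimes>\<^bsub>R\<^esub> left_rep Y) = b \<otimes>\<^bsub>L\<^esub> Y"
    using Y b y t B_iff by (simp_all add: P\<^sub>L_iff L.m_assoc[symmetric] eps_closed \<pi>_mult)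
  then have "left_coord u (b \<otimes>\<^bsub>L\<^esub> Y) = \<pi> (entry_coeff u (t \<otimes>\<^bsub>R\<^esub> left_rep Y))"
    using y t by (intro left_coord_eq[OF u]) simp_all
  then show ?thesis
    using y t by (simp add: left_coord_def entry_coeff_mult[OF u] entry_coeff_closed[OF u] \<pi>_mult)
qed

lemma entry_path_in_left_module: "\<pi> (pel (entry_qpath u)) \<in> carrier P\<^sub>L"
proof -
  have "\<epsilon> \<otimes>\<^bsub>L\<^esub> \<pi> (pel (entry_qpath u)) = \<pi> (pel (entry_qpath u))"
    using \<pi>_mult[OF e_closed entry_path_closed[OF u]] vtx_sum_mult_eq_if_starts_in[OF entry_path_starts_in[OF u]]
    by (simp add: eps_eq)
  then show ?thesis
    by (simp add: P\<^sub>L_iff \<pi>_closed entry_path_closed[OF u])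
qed

end

lemma left_decomposition:
  assumes Y: "Y \<in> carrier P\<^sub>L"
  shows "Y = (\<Oplus>\<^bsub>L\<^esub>u\<in>verts Qt. left_coord u Y \<otimes>\<^bsub>L\<^esub> \<pi> (pel (entry_qpath u)))"
proof -
  define y where "y = left_rep Y"
  have y: "y \<in> carrier R" "starts_in E y" "\<pi> y = Y"
    using left_rep[OF Y] by (simp_all add: y_def)
  have "(\<Oplus>\<^bsub>L\<^esub>u\<in>verts Qt. left_coord u Y \<otimes>\<^bsub>L\<^esub> \<pi> (pel (entry_qpath u))) =
      (\<Oplus>\<^bsub>L\<^esub>u\<in>verts Qt. \<pi> (y \<otimes>\<^bsub>R\<^esub> vtx u))"
  proof (rule L.finsum_cong'[OF refl])
    fix u assume u: "u \<in> verts Qt"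
    show "left_coord u Y \<otimes>\<^bsub>L\<^esub> \<pi> (pel (entry_qpath u)) = \<pi> (y \<otimes>\<^bsub>R\<^esub> vtx u)"
      using y by (simp add: left_coord_def y_def[symmetric] mult_vtx_eq_entry_coeff_mult_entry_path[OF u]
          \<pi>_mult entry_path_closed[OF u] entry_coeff_closed[OF u])
  qed (use y(1) vtx_closed in \<open>auto intro: \<pi>_closed\<close>)
  also have "\<dots> = \<pi> (\<Oplus>\<^bsub>R\<^esub>u\<in>verts Qt. y \<otimes>\<^bsub>R\<^esub> vtx u)"
    using y(1) vtx_closed by (intro \<pi>_finsum[symmetric] finite_verts_Qt) auto
  also have "(\<Oplus>\<^bsub>R\<^esub>u\<in>verts Qt. y \<otimes>\<^bsub>R\<^esub> vtx u) = y"
    using R.finsum_rdistr[OF finite_verts_Qt y(1), of vtx] vtx_closed y(1)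
    by (simp add: one_eq_finsum_vtx[symmetric])
  finally show ?thesis
    using y(3) by simp
qed

theorem left_projective_corner: "left_projective B P\<^sub>L TYPE('m) TYPE('n)"
  by (rule L.left_projective_left_corner_module_if_dual_basis[OF eps_closed eps_idem finite_verts_Qt,
        where x = "\<lambda>u. \<pi> (pel (entry_qpath u))" and \<phi> = left_coord])
    (simp_all add: entry_path_in_left_module left_coord_closed left_coord_add left_coord_mult
      left_decomposition[symmetric])

end

theorem theorem1p13:
  fixes Q :: "('v, 'a) quiver"
    and I G :: "(('v, 'a) qpath \<Rightarrow> 'k::field) set"
    and A :: nat
  assumes "finite (verts Q)" and "finite (arrs Q)"
    and "\<forall>\<alpha>\<in>arrs Q. src Q \<alpha> \<in> verts Q \<and> tgt Q \<alpha> \<in> verts Q"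
    and "admissible Q I"
    and "minimal_generating_set Q G I"
    and "\<forall>g\<in>G. uniform Q g"
    and "A \<ge> 1"
  shows "right_projective
           (corner_ring (stretched_algebra A Q G) (stretched_eps A Q G))
           (right_corner_module (stretched_algebra A Q G) (stretched_eps A Q G))
           TYPE('m) TYPE('n)
       \<and> left_projective
           (corner_ring (stretched_algebra A Q G) (stretched_eps A Q G))
           (left_corner_module (stretched_algebra A Q G) (stretched_eps A Q G))
           TYPE('m) TYPE('n)"
proof -
  have "G \<subseteq> carrier (path_algebra Q)"
    using assms(5) by (simp add: minimal_generating_set_def)
  then interpret stretched_setting Q A G
    using assms by unfold_locales auto
  show ?thesis
    using right_projective_corner left_projective_corner by blast
qed

end
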